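(* Let $\varepsilon>0$ and let $G:\mathbb{R}\to\mathbb{R}$ satisfy: $G\ge 0$ and $\mathrm{supp}(G)=\mathbb{R}$; $G\in W^{1,1}(\mathbb{R})\cap L^\infty(\mathbb{R})\cap C^2(\mathbb{R})$; $G(x)=g(|x|)$ with $g'(r)<0$ for all $r>0$, $g''(0)<0$, $\lim_{r\to+\infty}g(r)=0$; and $\int G=1$. Let $\rho\in L^2(\mathbb{R})\cap\mathcal{P}$ be a stationary solution in one space dimension, i.e. $$\rho\,\partial_x(\varepsilon\rho-G*\rho)=0\quad\text{a.e. on }\mathbb{R}.$$ Then $\mathrm{supp}(\rho)$ is a connected set.
   Context: $\mathcal{P}=\{\rho\in L^1(\mathbb{R}):\rho\ge0,\ \int_{\mathbb{R}}\rho\,dx=1\}$. $G*\rho(x)=\int G(x-y)\rho(y)\,dy$. *)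

theory Defs
  imports "HOL-Analysis.Analysis"
begin

definition conv :: "(real \<Rightarrow> real) \<Rightarrow> (real \<Rightarrow> real) \<Rightarrow> real \<Rightarrow> real" where
  "conv G \<rho> x = (LINT y|lborel. G (x - y) * \<rho> y)"

definition test_fun :: "(real \<Rightarrow> real) \<Rightarrow> bool" where
  "test_fun \<phi> \<longleftrightarrow>
     (\<forall>k x. ((deriv ^^ k) \<phi> has_real_derivative (deriv ^^ Suc k) \<phi> x) (at x)) \<and>
     bounded {x. \<phi> x \<noteq> 0}"

definition locally_integrable :: "(real \<Rightarrow> real) \<Rightarrow> bool" where
  "locally_integrable u \<longleftrightarrow> u \<in> borel_measurable lborel \<and>
     (\<forall>K. compact K \<longrightarrow> set_integrable lborel K u)"

definition weak_deriv :: "(real \<Rightarrow> real) \<Rightarrow> (real \<Rightarrow> real) \<Rightarrow> bool" where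
  "weak_deriv u w \<longleftrightarrow> locally_integrable u \<and> locally_integrable w \<and>
     (\<forall>\<phi>. test_fun \<phi> \<longrightarrow>
        (LINT x|lborel. u x * deriv \<phi> x) = - (LINT x|lborel. w x * \<phi> x))"

definition esssupp :: "(real \<Rightarrow> real) \<Rightarrow> real set" where
  "esssupp f = - \<Union>{U. open U \<and> (AE x in lborel. x \<in> U \<longrightarrow> f x = 0)}"

end

theory Submission
  imports Defs "HOL-Computational_Algebra.Polynomial"
begin

text \<open>If the support of \<open>\<rho>\<close> is disconnected, \<open>\<rho>\<close> vanishes a.e. on an interval \<open>[t\<^sub>1, t\<^sub>2]\<close> and
  has mass on both sides of it. Put \<open>K = G'\<close>: it is odd, and positive on \<open>(-\<infinity>, 0)\<close> because \<open>g\<close>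
  decreases. The stationarity equation says that \<open>R = \<epsilon> \<rho>\<close> has, to the right of any \<open>s\<close>, the
  absolutely continuous representative \<open>R(x) = R(s) + \<integral>\<^sub>s\<^sup>x (w + K * \<rho>)\<close>, and that \<open>\<rho> w = 0\<close>.
  Integrating \<open>R R'\<close> from \<open>s\<close> to a point \<open>t\<close> of the gap, where \<open>R(t) = 0\<close>, gives
  \<open>\<epsilon> \<integral>\<^sub>s\<^sup>t \<rho> (K * \<rho>) = - R(s)\<^sup>2 / 2 \<le> 0\<close>, and the integral over \<open>[s, t]\<close> equals the one over
  \<open>[s, t\<^sub>1]\<close>. On the other hand the integral of \<open>\<rho> (K * \<rho>)\<close> over \<open>(-\<infinity>, t\<^sub>1]\<close> is positive: the
  self-interaction of the left part cancels by oddness of \<open>K\<close>, and its attraction to the right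
  part is positive. So for some \<open>s < t\<^sub>1\<close> the integral over \<open>[s, t\<^sub>1]\<close> is positive, a
  contradiction.\<close>

section \<open>Smooth functions\<close>

definition smooth :: "(real \<Rightarrow> real) \<Rightarrow> bool" where
  "smooth f \<longleftrightarrow> (\<forall>k x. ((deriv ^^ k) f has_real_derivative (deriv ^^ Suc k) f x) (at x))"

text \<open>\<open>differentiable_upto n f\<close> means that \<open>f\<close> is \<open>n + 1\<close> times differentiable.\<close>
definition differentiable_upto :: "nat \<Rightarrow> (real \<Rightarrow> real) \<Rightarrow> bool" where
  "differentiable_upto n f \<longleftrightarrow>
     (\<forall>k\<le>n. \<forall>x. ((deriv ^^ k) f has_real_derivative (deriv ^^ Suc k) f x) (at x))"

lemma smooth_iff_differentiable_upto: "smooth f \<longleftrightarrow> (\<forall>n. differentiable_upto n f)"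
  unfolding smooth_def differentiable_upto_def by blast

lemma differentiable_upto_0:
  "differentiable_upto 0 f \<longleftrightarrow> (\<forall>x. (f has_real_derivative deriv f x) (at x))"
  unfolding differentiable_upto_def by simp

lemma differentiable_upto_Suc:
  "differentiable_upto (Suc n) f \<longleftrightarrow> differentiable_upto 0 f \<and> differentiable_upto n (deriv f)"
proof -
  have shift: "(deriv ^^ Suc k) f = (deriv ^^ k) (deriv f)" for k
    by (simp add: funpow_Suc_right del: funpow.simps)
  have "(\<forall>k\<le>Suc n. P k) \<longleftrightarrow> P 0 \<and> (\<forall>k\<le>n. P (Suc k))" for P
    using All_less_Suc2[of "Suc n" P] by (simp add: less_Suc_eq_le)
  then show ?thesis
    unfolding differentiable_upto_def by (simp add: shift del: funpow.simps)
qed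

lemma differentiable_upto_mono: "differentiable_upto n f \<Longrightarrow> k \<le> n \<Longrightarrow> differentiable_upto k f"
  unfolding differentiable_upto_def by auto

lemma differentiable_upto_imp_DERIV:
  "differentiable_upto n f \<Longrightarrow> (f has_real_derivative deriv f x) (at x)"
  using differentiable_upto_mono[of n f 0] by (auto simp: differentiable_upto_0)

lemma deriv_eqI: "(\<And>x. (f has_real_derivative f' x) (at x)) \<Longrightarrow> deriv f = f'"
  by (rule ext) (rule DERIV_imp_deriv)

lemma differentiable_upto_0I:
  assumes "\<And>x. (f has_real_derivative f' x) (at x)"
  shows "differentiable_upto 0 f"
  using assms deriv_eqI[OF assms] by (simp add: differentiable_upto_0)

lemma differentiable_upto_SucI:
  assumes "\<And>x. (f has_real_derivative f' x) (at x)" and "differentiable_upto n f'"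
  shows "differentiable_upto (Suc n) f"
  using assms differentiable_upto_0I[OF assms(1)] deriv_eqI[OF assms(1)]
  by (simp add: differentiable_upto_Suc)

lemma differentiable_upto_const: "differentiable_upto n (\<lambda>x. c)"
  by (induction n arbitrary: c)
     (auto intro!: differentiable_upto_0I[where f'="\<lambda>x. 0"]
        differentiable_upto_SucI[where f'="\<lambda>x. 0"])

lemma differentiable_upto_add:
  "differentiable_upto n f \<Longrightarrow> differentiable_upto n g \<Longrightarrow> differentiable_upto n (\<lambda>x. f x + g x)"
proof (induction n arbitrary: f g)
  case 0
  then show ?case
    by (intro differentiable_upto_0I[where f'="\<lambda>x. deriv f x + deriv g x"] DERIV_add
        differentiable_upto_imp_DERIV)
next
  case (Suc n)
  then have "differentiable_upto n (\<lambda>x. deriv f x + deriv g x)"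
    by (intro Suc.IH) (auto simp: differentiable_upto_Suc)
  with Suc.prems show ?case
    by (intro differentiable_upto_SucI[where f'="\<lambda>x. deriv f x + deriv g x"] DERIV_add
        differentiable_upto_imp_DERIV)
qed

lemma differentiable_upto_mult:
  "differentiable_upto n f \<Longrightarrow> differentiable_upto n g \<Longrightarrow> differentiable_upto n (\<lambda>x. f x * g x)"
proof (induction n arbitrary: f g)
  case 0
  then show ?case
    by (intro differentiable_upto_0I[where f'="\<lambda>x. deriv f x * g x + deriv g x * f x"]
        DERIV_mult differentiable_upto_imp_DERIV)
next
  case (Suc n)
  have "differentiable_upto n f" "differentiable_upto n g"
    using Suc.prems differentiable_upto_mono by auto
  with Suc.prems have "differentiable_upto n (\<lambda>x. deriv f x * g x + deriv g x * f x)"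
    by (intro differentiable_upto_add Suc.IH) (auto simp: differentiable_upto_Suc)
  with Suc.prems show ?case
    by (intro differentiable_upto_SucI[where f'="\<lambda>x. deriv f x * g x + deriv g x * f x"]
        DERIV_mult differentiable_upto_imp_DERIV)
qed

lemma differentiable_upto_affine:
  "differentiable_upto n f \<Longrightarrow> differentiable_upto n (\<lambda>x. f (a * x + b))"
proof (induction n arbitrary: f)
  case 0
  have "((\<lambda>x. f (a * x + b)) has_real_derivative deriv f (a * x + b) * a) (at x)" for x
    by (rule DERIV_chain2[OF differentiable_upto_imp_DERIV[OF 0]])
       (auto intro!: derivative_eq_intros)
  then show ?case by (rule differentiable_upto_0I)
next
  case (Suc n)
  have "((\<lambda>x. f (a * x + b)) has_real_derivative deriv f (a * x + b) * a) (at x)" for x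
    by (rule DERIV_chain2[OF differentiable_upto_imp_DERIV[OF Suc.prems]])
       (auto intro!: derivative_eq_intros)
  moreover have "differentiable_upto n (\<lambda>x. deriv f (a * x + b) * a)"
    using Suc by (intro differentiable_upto_mult differentiable_upto_const)
                 (auto simp: differentiable_upto_Suc)
  ultimately show ?case by (rule differentiable_upto_SucI)
qed

lemma smooth_const: "smooth (\<lambda>x. c)"
  by (simp add: smooth_iff_differentiable_upto differentiable_upto_const)

lemma smooth_add: "smooth f \<Longrightarrow> smooth g \<Longrightarrow> smooth (\<lambda>x. f x + g x)"
  by (simp add: smooth_iff_differentiable_upto differentiable_upto_add)

lemma smooth_mult: "smooth f \<Longrightarrow> smooth g \<Longrightarrow> smooth (\<lambda>x. f x * g x)"
  by (simp add: smooth_iff_differentiable_upto differentiable_upto_mult)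

lemma smooth_cmult: "smooth f \<Longrightarrow> smooth (\<lambda>x. c * f x)"
  by (rule smooth_mult[OF smooth_const])

lemma smooth_diff: "smooth f \<Longrightarrow> smooth g \<Longrightarrow> smooth (\<lambda>x. f x - g x)"
  using smooth_add[of f "\<lambda>x. (-1) * g x"] smooth_cmult[of g "-1"] by simp

lemma smooth_affine: "smooth f \<Longrightarrow> smooth (\<lambda>x. f (a * x + b))"
  by (simp add: smooth_iff_differentiable_upto differentiable_upto_affine)

lemma smooth_rescale: "smooth f \<Longrightarrow> d \<noteq> 0 \<Longrightarrow> smooth (\<lambda>x. f ((x - a) / d))"
  using smooth_affine[of f "1 / d" "- a / d"] by (simp add: diff_divide_distrib)

lemma smooth_primitive:
  assumes "\<And>x. (f has_real_derivative f' x) (at x)" and "smooth f'"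
  shows "smooth f"
  unfolding smooth_iff_differentiable_upto
proof
  fix n show "differentiable_upto n f"
    using assms by (cases n) (auto intro: differentiable_upto_0I differentiable_upto_SucI
        simp: smooth_iff_differentiable_upto)
qed

lemma smooth_imp_DERIV: "smooth f \<Longrightarrow> (f has_real_derivative deriv f x) (at x)"
  by (simp add: smooth_iff_differentiable_upto differentiable_upto_imp_DERIV)

lemma smooth_deriv: "smooth f \<Longrightarrow> smooth (deriv f)"
  by (meson differentiable_upto_Suc smooth_iff_differentiable_upto)

lemma smooth_imp_continuous_on: "smooth f \<Longrightarrow> continuous_on A f"
  by (meson DERIV_isCont smooth_imp_DERIV continuous_at_imp_continuous_on)

lemma test_fun_iff: "test_fun \<phi> \<longleftrightarrow> smooth \<phi> \<and> bounded {x. \<phi> x \<noteq> 0}"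
  unfolding test_fun_def smooth_def ..

text \<open>The functions \<open>poly p (1/x) * exp (-1/x)\<close>, extended by \<open>0\<close> to \<open>x \<le> 0\<close>, form a family closed
  under differentiation; this is what makes \<open>exp (-1/x)\<close> smooth at \<open>0\<close>.\<close>
definition flat_exp :: "real poly \<Rightarrow> real \<Rightarrow> real" where
  "flat_exp p x = (if x > 0 then poly p (1 / x) * exp (- 1 / x) else 0)"

lemma poly_mult_exp_neg_tendsto_0: "((\<lambda>y. poly (p :: real poly) y * exp (- y)) \<longlongrightarrow> 0) at_top"
proof -
  have "poly p y * exp (- y) = (\<Sum>i\<le>degree p. coeff p i * (y ^ i / exp y))" for y :: real
    by (simp add: poly_altdef exp_minus field_simps sum_divide_distrib)
  moreover have "((\<lambda>y. \<Sum>i\<le>degree p. coeff p i * (y ^ i / exp y)) \<longlongrightarrow> (\<Sum>i\<le>degree p. coeff p i * 0))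
      at_top"
    by (intro tendsto_intros tendsto_power_div_exp_0)
  ultimately show ?thesis by simp
qed

lemma poly_inverse_mult_exp_tendsto_0:
  "((\<lambda>x. poly (p :: real poly) (1 / x) * exp (- 1 / x)) \<longlongrightarrow> 0) (at_right 0)"
  using filterlim_compose[OF poly_mult_exp_neg_tendsto_0 filterlim_inverse_at_top_right]
  by (simp add: divide_inverse)

lemma flat_exp_DERIV:
  "(flat_exp p has_real_derivative flat_exp ([:0, 0, 1:] * (p - pderiv p)) x) (at x)"
proof -
  consider "x > 0" | "x < 0" | "x = 0" by linarith
  then show ?thesis
  proof cases
    case 1
    have inv: "((\<lambda>x. 1 / x) has_real_derivative - 1 / x\<^sup>2) (at x)"
      and neg_inv: "((\<lambda>x. - 1 / x) has_real_derivative 1 / x\<^sup>2) (at x)"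
      using 1 by (auto intro!: derivative_eq_intros simp: power2_eq_square)
    have "((\<lambda>x. poly p (1 / x) * exp (- 1 / x)) has_real_derivative
        poly (pderiv p) (1 / x) * (- 1 / x\<^sup>2) * exp (- 1 / x)
        + exp (- 1 / x) * (1 / x\<^sup>2) * poly p (1 / x)) (at x)"
      by (rule DERIV_mult[OF DERIV_chain2[OF poly_DERIV inv] DERIV_chain2[OF DERIV_exp neg_inv]])
    moreover have "poly (pderiv p) (1 / x) * (- 1 / x\<^sup>2) * exp (- 1 / x)
        + exp (- 1 / x) * (1 / x\<^sup>2) * poly p (1 / x) = flat_exp ([:0, 0, 1:] * (p - pderiv p)) x"
      using 1 by (simp add: flat_exp_def field_simps power2_eq_square)
    ultimately have "((\<lambda>x. poly p (1 / x) * exp (- 1 / x)) has_real_derivative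
        flat_exp ([:0, 0, 1:] * (p - pderiv p)) x) (at x)"
      by simp
    then show ?thesis
      by (rule has_field_derivative_transform_within_open[where S="{0<..}"])
         (use 1 in \<open>auto simp: flat_exp_def\<close>)
  next
    case 2
    have "((\<lambda>x. 0) has_real_derivative flat_exp ([:0, 0, 1:] * (p - pderiv p)) x) (at x)"
      using 2 by (simp add: flat_exp_def)
    then show ?thesis
      by (rule has_field_derivative_transform_within_open[where S="{..<0}"])
         (use 2 in \<open>auto simp: flat_exp_def\<close>)
  next
    case 3
    have right: "((\<lambda>h. (flat_exp p (0 + h) - flat_exp p 0) / h) \<longlongrightarrow> 0) (at_right 0)"
    proof (rule Lim_transform_eventually[OF poly_inverse_mult_exp_tendsto_0[of "[:0, 1:] * p"]])
      show "\<forall>\<^sub>F h in at_right 0. poly ([:0, 1:] * p) (1 / h) * exp (- 1 / h)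
          = (flat_exp p (0 + h) - flat_exp p 0) / h"
        by (auto simp: eventually_at_right_less flat_exp_def field_simps
            intro!: eventually_mono[OF eventually_at_right_less])
    qed
    have left: "((\<lambda>h. (flat_exp p (0 + h) - flat_exp p 0) / h) \<longlongrightarrow> 0) (at_left 0)"
    proof (rule Lim_transform_eventually[of "\<lambda>_. 0"])
      show "\<forall>\<^sub>F h in at_left 0. 0 = (flat_exp p (0 + h) - flat_exp p 0) / h"
        by (auto simp: flat_exp_def intro!: eventually_mono[OF eventually_at_left_real[of "-1" 0]])
    qed simp
    have "flat_exp ([:0, 0, 1:] * (p - pderiv p)) 0 = 0"
      by (simp add: flat_exp_def)
    then show ?thesis
      unfolding 3 DERIV_def using filterlim_split_at[OF left right] by simp
  qed
qed

lemma smooth_flat_exp: "smooth (flat_exp p)"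
proof -
  let ?D = "\<lambda>q. [:0, 0, 1:] * (q - pderiv q)"
  have iter: "(deriv ^^ k) (flat_exp p) = flat_exp ((?D ^^ k) p)" for k
    by (induction k) (simp_all add: deriv_eqI[OF flat_exp_DERIV])
  show ?thesis
    unfolding smooth_def iter unfolding funpow.simps(2) o_apply by (intro allI flat_exp_DERIV)
qed

definition bump :: "real \<Rightarrow> real" where
  "bump x = flat_exp 1 x * flat_exp 1 (1 - x)"

lemma bump_eq: "bump x = (if 0 < x \<and> x < 1 then exp (- 1 / x) * exp (- 1 / (1 - x)) else 0)"
  by (simp add: bump_def flat_exp_def)

lemma smooth_bump: "smooth bump"
  using smooth_mult[OF smooth_flat_exp smooth_affine[OF smooth_flat_exp, of 1 "-1" 1]]
  by (simp add: bump_def[abs_def])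

lemma continuous_on_bump: "continuous_on A bump"
  by (rule smooth_imp_continuous_on[OF smooth_bump])

lemma bump_nonneg: "bump x \<ge> 0"
  by (simp add: bump_eq)

lemma bump_eq_0: "x \<le> 0 \<or> 1 \<le> x \<Longrightarrow> bump x = 0"
  by (auto simp: bump_eq)

lemma integral_from_eq_0:
  fixes f :: "real \<Rightarrow> real"
  assumes "\<And>x. x \<le> 0 \<Longrightarrow> f x = 0" and "x \<le> 0"
  shows "integral {-1..x} f = 0"
  using integral_cong[of "{-1..x}" f "\<lambda>_. 0"] assms by simp

lemma integral_from_DERIV:
  fixes f :: "real \<Rightarrow> real"
  assumes cont: "continuous_on UNIV f" and vanish: "\<And>x. x \<le> 0 \<Longrightarrow> f x = 0"
  shows "((\<lambda>x. integral {-1..x} f) has_real_derivative f x) (at x)"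
proof (cases "x > -1")
  case True
  have "((\<lambda>u. integral {-1..u} f) has_vector_derivative f x) (at x within {-1..x+1})"
    by (rule integral_has_vector_derivative) (use True cont in \<open>auto intro: continuous_on_subset\<close>)
  moreover have "at x within {-1..x+1} = at x"
    using True by (intro at_within_Icc_at) auto
  ultimately show ?thesis
    by (simp add: has_real_derivative_iff_has_vector_derivative)
next
  case False
  have "((\<lambda>_. 0) has_real_derivative f x) (at x)"
    using False vanish by simp
  then show ?thesis
    by (rule has_field_derivative_transform_within_open[where S="{..<0}"])
       (use False integral_from_eq_0[OF vanish] in force)+
qed

lemma integral_from_eq_affine:
  fixes f :: "real \<Rightarrow> real"
  assumes cont: "continuous_on UNIV f" and const: "\<And>x. x \<ge> 1 \<Longrightarrow> f x = c" and "x \<ge> 1"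
  shows "integral {-1..x} f = integral {-1..1} f + c * (x - 1)"
proof -
  have "integral {-1..1} f + integral {1..x} f = integral {-1..x} f"
    using Henstock_Kurzweil_Integration.integral_combine[of "-1" 1 x f] \<open>x \<ge> 1\<close> cont
    by (auto intro: integrable_continuous_interval continuous_on_subset)
  moreover have "integral {1..x} f = integral {1..x} (\<lambda>_. c)"
    by (rule integral_cong) (use const in auto)
  ultimately show ?thesis
    using \<open>x \<ge> 1\<close> by (simp add: mult.commute)
qed

definition smooth_step :: "real \<Rightarrow> real" where
  "smooth_step x = integral {-1..x} bump / integral {-1..1} bump"

definition smooth_ramp :: "real \<Rightarrow> real" where
  "smooth_ramp x = integral {-1..x} smooth_step"

lemma bump_mass_pos: "integral {-1..1} bump > 0"
proof -
  have "integral {-1..1} bump \<ge> 0"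
    by (rule integral_nonneg) (auto intro: integrable_continuous_interval continuous_on_bump bump_nonneg)
  moreover have "integral {-1..1} bump \<noteq> 0"
  proof
    assume "integral {-1..1} bump = 0"
    then have "bump (1/2) = 0"
      using integral_eq_0_iff[of "-1" 1 bump] bump_nonneg continuous_on_bump by auto
    then show False
      by (simp add: bump_eq)
  qed
  ultimately show ?thesis by simp
qed

lemma smooth_step_DERIV: "(smooth_step has_real_derivative bump x / integral {-1..1} bump) (at x)"
  unfolding smooth_step_def[abs_def]
  by (intro DERIV_cdivide integral_from_DERIV continuous_on_bump) (simp add: bump_eq_0)

lemma smooth_smooth_step: "smooth smooth_step"
proof (rule smooth_primitive[OF smooth_step_DERIV])
  have "(\<lambda>x. bump x / integral {-1..1} bump) = (\<lambda>x. (1 / integral {-1..1} bump) * bump x)"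
    by simp
  then show "smooth (\<lambda>x. bump x / integral {-1..1} bump)"
    using smooth_cmult[OF smooth_bump] by metis
qed

lemma continuous_on_smooth_step: "continuous_on A smooth_step"
  by (rule smooth_imp_continuous_on[OF smooth_smooth_step])

lemma smooth_step_eq_0: "x \<le> 0 \<Longrightarrow> smooth_step x = 0"
  by (simp add: smooth_step_def integral_from_eq_0 bump_eq_0)

lemma smooth_step_eq_1: "x \<ge> 1 \<Longrightarrow> smooth_step x = 1"
  using integral_from_eq_affine[OF continuous_on_bump, of 0 x] bump_mass_pos
  by (simp add: smooth_step_def bump_eq_0)

lemma smooth_step_bounds: "0 \<le> smooth_step x" "smooth_step x \<le> 1"
proof -
  have int: "bump integrable_on {-1..y}" for y
    by (rule integrable_continuous_interval[OF continuous_on_bump])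
  show "0 \<le> smooth_step x"
    unfolding smooth_step_def using bump_mass_pos int
    by (intro divide_nonneg_pos integral_nonneg) (auto simp: bump_nonneg)
  show "smooth_step x \<le> 1"
  proof (cases "x \<ge> 1")
    case False
    then have "integral {-1..x} bump \<le> integral {-1..1} bump"
      by (intro integral_subset_le int) (auto simp: bump_nonneg)
    then show ?thesis
      using bump_mass_pos by (simp add: smooth_step_def)
  qed (simp add: smooth_step_eq_1)
qed

lemma smooth_ramp_DERIV: "(smooth_ramp has_real_derivative smooth_step x) (at x)"
  unfolding smooth_ramp_def[abs_def]
  by (intro integral_from_DERIV continuous_on_smooth_step smooth_step_eq_0)

lemma smooth_ramp_eq_0: "x \<le> 0 \<Longrightarrow> smooth_ramp x = 0"
  by (simp add: smooth_ramp_def integral_from_eq_0 smooth_step_eq_0)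

lemma smooth_ramp_eq_affine: "x \<ge> 1 \<Longrightarrow> smooth_ramp x = smooth_ramp 1 + (x - 1)"
  using integral_from_eq_affine[OF continuous_on_smooth_step smooth_step_eq_1, of x]
  by (simp add: smooth_ramp_def)

section \<open>Test functions approximating indicators of intervals\<close>

definition plateau :: "real \<Rightarrow> real \<Rightarrow> real \<Rightarrow> real \<Rightarrow> real" where
  "plateau a b d x = smooth_step ((x - a) / d) - smooth_step ((x - b) / d)"

definition plateau_primitive :: "real \<Rightarrow> real \<Rightarrow> real \<Rightarrow> real \<Rightarrow> real" where
  "plateau_primitive a b d x = d * (smooth_ramp ((x - a) / d) - smooth_ramp ((x - b) / d))"

lemma plateau_primitive_DERIV:
  assumes "d > 0"
  shows "(plateau_primitive a b d has_real_derivative plateau a b d x) (at x)"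
proof -
  have "((\<lambda>x. d * smooth_ramp ((x - c) / d)) has_real_derivative smooth_step ((x - c) / d)) (at x)"
    for c
  proof -
    have "((\<lambda>x. (x - c) / d) has_real_derivative 1 / d) (at x)"
      using assms by (auto intro!: derivative_eq_intros)
    from DERIV_cmult[OF DERIV_chain2[OF smooth_ramp_DERIV this], of d] show ?thesis
      using assms by simp
  qed
  then show ?thesis
    unfolding plateau_primitive_def[abs_def] plateau_def right_diff_distrib
    by (intro DERIV_diff)
qed

lemma smooth_plateau: "d \<noteq> 0 \<Longrightarrow> smooth (plateau a b d)"
  unfolding plateau_def[abs_def] by (intro smooth_diff smooth_rescale smooth_smooth_step)

lemma smooth_plateau_primitive:
  assumes "d > 0"
  shows "smooth (plateau_primitive a b d)"
  using assms by (intro smooth_primitive[OF plateau_primitive_DERIV[OF assms]] smooth_plateau) simp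

lemma plateau_primitive_eq_0:
  assumes "d > 0" "a \<le> b" "x \<le> a"
  shows "plateau_primitive a b d x = 0"
proof -
  have "(x - a) / d \<le> 0" "(x - b) / d \<le> 0"
    using assms by (auto intro: divide_nonpos_pos)
  then show ?thesis
    by (simp add: plateau_primitive_def smooth_ramp_eq_0)
qed

lemma plateau_primitive_eq_length:
  assumes "d > 0" "a \<le> b" "x \<ge> b + d"
  shows "plateau_primitive a b d x = b - a"
proof -
  have "(x - a) / d \<ge> 1" "(x - b) / d \<ge> 1"
    using assms by (auto simp: field_simps)
  then have "plateau_primitive a b d x = d * ((x - a) / d - (x - b) / d)"
    unfolding plateau_primitive_def by (simp add: smooth_ramp_eq_affine[of "(x - a) / d"]
        smooth_ramp_eq_affine[of "(x - b) / d"])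
  also have "\<dots> = b - a"
    using assms by (simp add: field_simps)
  finally show ?thesis .
qed

lemma abs_plateau_le_1: "\<bar>plateau a b d x\<bar> \<le> 1"
  using smooth_step_bounds[of "(x - a) / d"] smooth_step_bounds[of "(x - b) / d"]
  unfolding plateau_def by linarith

lemma plateau_eq_0:
  assumes "d > 0" "a \<le> b" "x \<le> a \<or> x \<ge> b + d"
  shows "plateau a b d x = 0"
  using assms(3)
proof
  assume "x \<le> a"
  then have "(x - a) / d \<le> 0" "(x - b) / d \<le> 0"
    using assms by (auto intro: divide_nonpos_pos)
  then show ?thesis
    by (simp add: plateau_def smooth_step_eq_0)
next
  assume "x \<ge> b + d"
  then have "(x - a) / d \<ge> 1" "(x - b) / d \<ge> 1"
    using assms by (auto simp: field_simps)
  then show ?thesis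
    by (simp add: plateau_def smooth_step_eq_1)
qed

lemma plateau_tendsto_indicator:
  assumes "a \<le> b"
  shows "(\<lambda>n. plateau a b (1 / Suc n) x) \<longlonglongrightarrow> indicator {a<..b} x"
proof (rule tendsto_eventually)
  have small: "\<forall>\<^sub>F n in sequentially. 1 / real (Suc n) < e" if "e > 0" for e :: real
    using order_tendstoD(2)[OF LIMSEQ_inverse_real_of_nat that] by (simp add: inverse_eq_divide)
  consider "x \<le> a" | "a < x" "x \<le> b" | "b < x" by linarith
  then show "\<forall>\<^sub>F n in sequentially. plateau a b (1 / Suc n) x = indicator {a<..b} x"
  proof cases
    case 1
    then show ?thesis
      using assms by (simp add: plateau_eq_0)
  next
    case 2
    have "plateau a b (1 / Suc n) x = 1" if "1 / real (Suc n) < x - a" for n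
    proof -
      have "smooth_step ((x - a) / (1 / Suc n)) = 1"
        using that by (intro smooth_step_eq_1) (simp add: field_simps)
      moreover have "smooth_step ((x - b) / (1 / Suc n)) = 0"
        using 2 by (intro smooth_step_eq_0 divide_nonpos_pos) auto
      ultimately show ?thesis
        by (simp add: plateau_def)
    qed
    then show ?thesis
      using small[of "x - a"] 2 by (auto elim!: eventually_mono)
  next
    case 3
    have "plateau a b (1 / Suc n) x = 0" if "1 / real (Suc n) < x - b" for n
      using that assms by (intro plateau_eq_0) auto
    then show ?thesis
      using small[of "x - b"] 3 by (auto elim!: eventually_mono)
  qed
qed

text \<open>The weights make the two primitives agree to the right of both plateaus, so that their
  difference has compact support.\<close>
definition balanced_test :: "real \<Rightarrow> real \<Rightarrow> real \<Rightarrow> real \<Rightarrow> real \<Rightarrow> real \<Rightarrow> real" where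
  "balanced_test a b a' b' d x =
     (b' - a') * plateau_primitive a b d x - (b - a) * plateau_primitive a' b' d x"

lemma deriv_balanced_test:
  "d > 0 \<Longrightarrow>
    deriv (balanced_test a b a' b' d) x = (b' - a') * plateau a b d x - (b - a) * plateau a' b' d x"
  unfolding balanced_test_def[abs_def]
  by (intro DERIV_imp_deriv DERIV_diff DERIV_cmult plateau_primitive_DERIV)

lemma balanced_test_eq_0:
  assumes "d > 0" "a \<le> b" "a' \<le> b'" and x: "x \<le> min a a' \<or> x \<ge> max b b' + d"
  shows "balanced_test a b a' b' d x = 0"
  using x
proof
  assume "x \<le> min a a'"
  then show ?thesis
    using assms by (simp add: balanced_test_def plateau_primitive_eq_0)
next
  assume "x \<ge> max b b' + d"
  then show ?thesis
    using assms by (simp add: balanced_test_def plateau_primitive_eq_length)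
qed

lemma test_fun_balanced_test:
  assumes "d > 0" "a \<le> b" "a' \<le> b'"
  shows "test_fun (balanced_test a b a' b' d)"
proof -
  have "{x. balanced_test a b a' b' d x \<noteq> 0} \<subseteq> {min a a'..max b b' + d}"
  proof
    fix x assume "x \<in> {x. balanced_test a b a' b' d x \<noteq> 0}"
    then show "x \<in> {min a a'..max b b' + d}"
      using balanced_test_eq_0[OF assms, of x] by (cases "x \<le> min a a' \<or> x \<ge> max b b' + d") auto
  qed
  then have "bounded {x. balanced_test a b a' b' d x \<noteq> 0}"
    by (rule bounded_subset[OF bounded_closed_interval])
  moreover have "smooth (balanced_test a b a' b' d)"
    unfolding balanced_test_def[abs_def]
    using assms by (intro smooth_diff smooth_cmult smooth_plateau_primitive)
  ultimately show ?thesis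
    by (simp add: test_fun_iff)
qed

lemma abs_deriv_balanced_test_le:
  assumes "d > 0"
  shows "\<bar>deriv (balanced_test a b a' b' d) x\<bar> \<le> \<bar>b' - a'\<bar> + \<bar>b - a\<bar>"
proof -
  have "\<bar>deriv (balanced_test a b a' b' d) x\<bar>
      \<le> \<bar>b' - a'\<bar> * \<bar>plateau a b d x\<bar> + \<bar>b - a\<bar> * \<bar>plateau a' b' d x\<bar>"
    unfolding deriv_balanced_test[OF assms] by (metis abs_mult abs_triangle_ineq4)
  also have "\<dots> \<le> \<bar>b' - a'\<bar> + \<bar>b - a\<bar>"
    by (intro add_mono mult_right_le_one_le abs_plateau_le_1) auto
  finally show ?thesis .
qed

lemma deriv_balanced_test_eq_0:
  assumes "d > 0" "a \<le> b" "a' \<le> b'"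
    and "(x \<le> a \<or> x \<ge> b + d) \<and> (x \<le> a' \<or> x \<ge> b' + d)"
  shows "deriv (balanced_test a b a' b' d) x = 0"
  using assms plateau_eq_0[of d a b x] plateau_eq_0[of d a' b' x]
  by (simp add: deriv_balanced_test)

lemma deriv_balanced_test_tendsto:
  assumes "a \<le> b" "a' \<le> b'"
  shows "(\<lambda>n. deriv (balanced_test a b a' b' (1 / Suc n)) x)
    \<longlonglongrightarrow> (b' - a') * indicator {a<..b} x - (b - a) * indicator {a'<..b'} x"
proof -
  have "deriv (balanced_test a b a' b' (1 / Suc n)) x
      = (b' - a') * plateau a b (1 / Suc n) x - (b - a) * plateau a' b' (1 / Suc n) x" for n
    by (rule deriv_balanced_test) simp
  then show ?thesis
    using assms by (simp only:) (intro tendsto_diff tendsto_mult_left plateau_tendsto_indicator)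
qed

section \<open>Integrals over intervals\<close>

lemma integrable_indicator_mult_subset:
  fixes f :: "real \<Rightarrow> real"
  assumes "integrable lborel (\<lambda>x. indicator B x * f x)" and "A \<subseteq> B" and "A \<in> sets borel"
  shows "integrable lborel (\<lambda>x. indicator A x * f x)"
proof -
  have "integrable lborel (\<lambda>x. indicator A x * (indicator B x * f x))"
    using integrable_mult_indicator[OF _ assms(1), of A] assms(3) by simp
  moreover have "(\<lambda>x. indicator A x * (indicator B x * f x)) = (\<lambda>x. indicator A x * f x)"
    using assms(2) by (auto simp: fun_eq_iff split: split_indicator)
  ultimately show ?thesis by simp
qed

lemma integrable_mult_bounded_supported:
  fixes f g :: "real \<Rightarrow> real"
  assumes f_int: "set_integrable lborel {a..b} f" and f_meas: "f \<in> borel_measurable lborel"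
    and g_meas: "g \<in> borel_measurable lborel" and g_bound: "\<And>x. \<bar>g x\<bar> \<le> C"
    and g_supp: "\<And>x. x < a \<or> x > b \<Longrightarrow> g x = 0"
  shows "integrable lborel (\<lambda>x. f x * g x)"
proof (rule Bochner_Integration.integrable_bound)
  show "integrable lborel (\<lambda>x. C * \<bar>indicator {a..b} x * f x\<bar>)"
    using f_int by (auto simp: set_integrable_def)
  show "(\<lambda>x. f x * g x) \<in> borel_measurable lborel"
    using f_meas g_meas by measurable
  have "C \<ge> 0"
    using g_bound[of 0] by simp
  have "\<bar>f x\<bar> * \<bar>g x\<bar> \<le> C * \<bar>f x\<bar>" for x
    using mult_right_mono[OF g_bound[of x] abs_ge_zero[of "f x"]] by (simp add: mult.commute)
  then show "AE x in lborel. norm (f x * g x) \<le> norm (C * \<bar>indicator {a..b} x * f x\<bar>)"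
    using g_supp \<open>C \<ge> 0\<close> by (intro AE_I2) (auto simp: abs_mult not_le split: split_indicator)
qed

lemma integral_Ioc_eq_Icc_diff:
  fixes r :: "real \<Rightarrow> real"
  assumes r_int: "integrable lborel (\<lambda>x. indicator {s..t} x * r x)" and "s \<le> y" "y \<le> t"
  shows "(\<integral>x. indicator {y<..t} x * r x \<partial>lborel)
    = (\<integral>x. indicator {s..t} x * r x \<partial>lborel) - (\<integral>x. indicator {s..y} x * r x \<partial>lborel)"
proof -
  have "integrable lborel (\<lambda>x. indicator {y<..t} x * r x)"
    and "integrable lborel (\<lambda>x. indicator {s..y} x * r x)"
    using assms by (auto intro: integrable_indicator_mult_subset[OF r_int])
  moreover have "(\<integral>x. indicator {s..t} x * r x \<partial>lborel)
      = (\<integral>x. indicator {s..y} x * r x + indicator {y<..t} x * r x \<partial>lborel)"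
    by (rule Bochner_Integration.integral_cong) (use assms in \<open>auto split: split_indicator\<close>)
  ultimately show ?thesis
    by simp
qed

lemma ex_in_Ioo_if_AE:
  fixes a b :: real
  assumes "AE x in lborel. P x" and "a < b"
  obtains x where "a < x" "x < b" "P x"
proof (rule ccontr)
  assume "\<not> thesis"
  with that have "AE x in lborel. x \<notin> {a<..<b}"
    using assms(1) by (auto elim: eventually_mono)
  then have "{a<..<b} \<in> null_sets lborel"
    by (subst AE_iff_null_sets) auto
  then have "emeasure lborel {a<..<b} = 0"
    by auto
  with \<open>a < b\<close> show False
    by simp
qed

lemma ex_Icc_integral_pos_if_Iic_integral_pos:
  fixes f :: "real \<Rightarrow> real"
  assumes f_int: "integrable lborel f" and pos: "(\<integral>x. indicator {..t} x * f x \<partial>lborel) > 0"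
  obtains s where "s < t" "(\<integral>x. indicator {s..t} x * f x \<partial>lborel) > 0"
proof -
  have [measurable]: "f \<in> borel_measurable lborel"
    using f_int by auto
  have "(\<lambda>n. \<integral>x. indicator {t - real n..t} x * f x \<partial>lborel) \<longlonglongrightarrow> (\<integral>x. indicator {..t} x * f x \<partial>lborel)"
  proof (rule integral_dominated_convergence[where w="\<lambda>x. \<bar>f x\<bar>"])
    show "AE x in lborel. (\<lambda>n. indicator {t - real n..t} x * f x) \<longlonglongrightarrow> indicator {..t} x * f x"
    proof (rule AE_I2, rule tendsto_eventually)
      fix x
      obtain N :: nat where "t - x \<le> real N"
        using real_arch_simple by blast
      then show "\<forall>\<^sub>F n in sequentially. indicator {t - real n..t} x * f x = indicator {..t} x * f x"
        by (intro eventually_sequentiallyI[of N]) (auto split: split_indicator)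
    qed
    show "AE x in lborel. norm (indicator {t - real n..t} x * f x) \<le> \<bar>f x\<bar>" for n
      by (auto split: split_indicator)
  qed (use f_int in auto)
  from order_tendstoD(1)[OF this pos]
  have "\<forall>\<^sub>F n in sequentially. (\<integral>x. indicator {t - real n..t} x * f x \<partial>lborel) > 0 \<and> n > 0"
    using eventually_gt_at_top[of 0] by (rule eventually_conj)
  then obtain N where "\<forall>n\<ge>N. (\<integral>x. indicator {t - real n..t} x * f x \<partial>lborel) > 0 \<and> n > 0"
    unfolding eventually_sequentially by blast
  then show ?thesis
    by (intro that[of "t - real N"]) auto
qed

lemma emeasure_density_halfline:
  fixes q :: "real \<Rightarrow> real"
  assumes q_int: "integrable lborel q" and q_nonneg: "\<And>x. q x \<ge> 0"
  shows "emeasure (density lborel (\<lambda>x. ennreal (q x))) {x<..}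
    = ennreal (\<integral>y. indicator {x<..} y * q y \<partial>lborel)"
proof -
  have [measurable]: "q \<in> borel_measurable lborel"
    using q_int by auto
  have "emeasure (density lborel (\<lambda>x. ennreal (q x))) {x<..}
      = (\<integral>\<^sup>+ y. ennreal (q y) * indicator {x<..} y \<partial>lborel)"
    by (rule emeasure_density) auto
  also have "\<dots> = (\<integral>\<^sup>+ y. ennreal (indicator {x<..} y * q y) \<partial>lborel)"
    by (rule nn_integral_cong) (auto split: split_indicator)
  also have "\<dots> = ennreal (\<integral>y. indicator {x<..} y * q y \<partial>lborel)"
    using integrable_mult_indicator[OF _ q_int, of "{x<..}"]
    by (intro nn_integral_eq_integral) (auto simp: q_nonneg)
  finally show ?thesis .
qed

lemma AE_eq_0_if_halfline_integrals_eq_0: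
  fixes f :: "real \<Rightarrow> real"
  assumes f_int: "integrable lborel f" and halfline: "\<And>x. (\<integral>y. indicator {x<..} y * f y \<partial>lborel) = 0"
  shows "AE x in lborel. f x = 0"
proof -
  define p where "p x = max 0 (f x)" for x
  define n where "n x = max 0 (- f x)" for x
  have pn_int: "integrable lborel p" "integrable lborel n"
    unfolding p_def n_def using f_int by auto
  have halfline_pn: "(\<integral>y. indicator {x<..} y * p y \<partial>lborel) = (\<integral>y. indicator {x<..} y * n y \<partial>lborel)"
    for x
  proof -
    have "(\<integral>y. indicator {x<..} y * p y \<partial>lborel) - (\<integral>y. indicator {x<..} y * n y \<partial>lborel)
        = (\<integral>y. indicator {x<..} y * p y - indicator {x<..} y * n y \<partial>lborel)"
      using integrable_mult_indicator[OF _ pn_int(1), of "{x<..}"]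
        integrable_mult_indicator[OF _ pn_int(2), of "{x<..}"]
      by (intro Bochner_Integration.integral_diff[symmetric]) auto
    also have "\<dots> = (\<integral>y. indicator {x<..} y * f y \<partial>lborel)"
      by (rule Bochner_Integration.integral_cong) (auto simp: p_def n_def split: split_indicator)
    finally show ?thesis
      using halfline[of x] by simp
  qed
  have "density lborel (\<lambda>x. ennreal (p x)) = density lborel (\<lambda>x. ennreal (n x))"
  proof (rule measure_eqI_lessThan)
    fix x
    show "emeasure (density lborel (\<lambda>x. ennreal (p x))) {x<..} < \<infinity>"
      by (subst emeasure_density_halfline[OF pn_int(1)]) (auto simp: p_def)
    show "emeasure (density lborel (\<lambda>x. ennreal (p x))) {x<..}
        = emeasure (density lborel (\<lambda>x. ennreal (n x))) {x<..}"
      by (subst emeasure_density_halfline[OF pn_int(1)], simp add: p_def,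
          subst emeasure_density_halfline[OF pn_int(2)], simp add: n_def)
         (simp add: halfline_pn)
  qed auto
  then have "AE x in lborel. ennreal (p x) = ennreal (n x)"
  proof (subst (asm) finite_density_unique)
    show "integral\<^sup>N lborel (\<lambda>x. ennreal (p x)) \<noteq> \<infinity>"
      using nn_integral_eq_integral[OF pn_int(1)] by (simp add: p_def)
  qed (use pn_int in auto)
  then show ?thesis
    by eventually_elim (auto simp: p_def n_def split: if_splits)
qed

lemma AE_eq_0_if_interval_integrals_eq_0:
  fixes f :: "real \<Rightarrow> real"
  assumes f_int: "\<And>c. set_integrable lborel {b..c} f"
    and f_meas[measurable]: "f \<in> borel_measurable lborel"
    and interval: "\<And>a c. b \<le> a \<Longrightarrow> a \<le> c \<Longrightarrow> (\<integral>y. indicator {a<..c} y * f y \<partial>lborel) = 0"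
  shows "AE x in lborel. x > b \<longrightarrow> f x = 0"
proof -
  have "AE x in lborel. x \<in> {b<..real N} \<longrightarrow> f x = 0" for N :: nat
  proof -
    define g where "g y = indicator {b<..real N} y * f y" for y
    have "integrable lborel (\<lambda>y. indicator {b..real N} y * f y)"
      using f_int[of "real N"] by (simp add: set_integrable_def)
    then have "integrable lborel g"
      unfolding g_def by (rule integrable_indicator_mult_subset) auto
    moreover have "(\<integral>y. indicator {x<..} y * g y \<partial>lborel) = 0" for x
    proof (cases "max x b \<le> real N")
      case True
      have "(\<integral>y. indicator {x<..} y * g y \<partial>lborel) = (\<integral>y. indicator {max x b<..real N} y * f y \<partial>lborel)"
        by (rule Bochner_Integration.integral_cong) (auto simp: g_def split: split_indicator)
      also have "\<dots> = 0"
        using True by (intro interval) auto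
      finally show ?thesis .
    next
      case False
      then have "(\<lambda>y. indicator {x<..} y * g y) = (\<lambda>y. 0)"
        by (auto simp: g_def fun_eq_iff split: split_indicator)
      then show ?thesis by simp
    qed
    ultimately have "AE x in lborel. g x = 0"
      by (rule AE_eq_0_if_halfline_integrals_eq_0)
    then show ?thesis
      by eventually_elim (auto simp: g_def)
  qed
  then have "AE x in lborel. \<forall>N::nat. x \<in> {b<..real N} \<longrightarrow> f x = 0"
    by (subst AE_all_countable) auto
  then show ?thesis
  proof eventually_elim
    fix x assume "\<forall>N::nat. x \<in> {b<..real N} \<longrightarrow> f x = 0"
    moreover obtain N :: nat where "x \<le> real N"
      using real_arch_simple by blast
    ultimately show "x > b \<longrightarrow> f x = 0" by auto
  qed
qed

lemma Fubini_bounded_kernel: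
  fixes f g :: "real \<Rightarrow> real" and k :: "real \<Rightarrow> real \<Rightarrow> real"
  assumes f: "integrable lborel f" and g: "integrable lborel g"
    and k[measurable]: "(\<lambda>p. k (fst p) (snd p)) \<in> borel_measurable (lborel \<Otimes>\<^sub>M lborel)"
    and k_bound: "\<And>x y. \<bar>k x y\<bar> \<le> 1"
  shows "integrable lborel (\<lambda>x. \<integral>y. f x * g y * k x y \<partial>lborel)"
    and "integrable lborel (\<lambda>y. \<integral>x. f x * g y * k x y \<partial>lborel)"
    and "(\<integral>x. (\<integral>y. f x * g y * k x y \<partial>lborel) \<partial>lborel) = (\<integral>y. (\<integral>x. f x * g y * k x y \<partial>lborel) \<partial>lborel)"
proof -
  have [measurable]: "f \<in> borel_measurable lborel" "g \<in> borel_measurable lborel"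
    using f g by auto
  have meas: "(\<lambda>p. f (fst p) * g (snd p) * k (fst p) (snd p)) \<in> borel_measurable (lborel \<Otimes>\<^sub>M lborel)"
    by measurable
  have [measurable]: "(\<lambda>y. k x y) \<in> borel_measurable lborel" for x
    using measurable_Pair2[OF k, of x] by simp
  have bound: "\<bar>f x * g y * k x y\<bar> \<le> \<bar>f x\<bar> * \<bar>g y\<bar>" for x y
    using k_bound[of x y] by (simp add: abs_mult mult_left_le)
  have abs_int: "integrable lborel (\<lambda>y. \<bar>f x\<bar> * \<bar>g y\<bar>)" for x
    using g by auto
  have slice: "integrable lborel (\<lambda>y. f x * g y * k x y)" for x
    by (rule Bochner_Integration.integrable_bound[OF abs_int[of x]]) (use bound in auto)
  have "integrable (lborel \<Otimes>\<^sub>M lborel) (\<lambda>(x, y). f x * g y * k x y)"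
  proof (rule lborel_pair.Fubini_integrable)
    show "(\<lambda>(x, y). f x * g y * k x y) \<in> borel_measurable (lborel \<Otimes>\<^sub>M lborel)"
      using meas by (simp add: case_prod_beta')
    show "AE x in lborel. integrable lborel (\<lambda>y. case (x, y) of (x, y) \<Rightarrow> f x * g y * k x y)"
      using slice by simp
    have "integrable lborel (\<lambda>x. \<bar>f x\<bar> * (\<integral>y. \<bar>g y\<bar> \<partial>lborel))"
      using f by auto
    then show "integrable lborel (\<lambda>x. \<integral>y. norm (case (x, y) of (x, y) \<Rightarrow> f x * g y * k x y) \<partial>lborel)"
    proof (rule Bochner_Integration.integrable_bound)
      show "(\<lambda>x. \<integral>y. norm (case (x, y) of (x, y) \<Rightarrow> f x * g y * k x y) \<partial>lborel) \<in> borel_measurable lborel"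
        using meas by measurable
      have "(\<integral>y. \<bar>f x * g y * k x y\<bar> \<partial>lborel) \<le> (\<integral>y. \<bar>f x\<bar> * \<bar>g y\<bar> \<partial>lborel)" for x
        by (rule integral_mono[OF _ abs_int]) (use slice bound in auto)
      then show "AE x in lborel. norm (\<integral>y. norm (case (x, y) of (x, y) \<Rightarrow> f x * g y * k x y) \<partial>lborel)
          \<le> norm (\<bar>f x\<bar> * (\<integral>y. \<bar>g y\<bar> \<partial>lborel))"
        by (intro AE_I2) (simp add: integral_nonneg_AE)
    qed
  qed
  then show "integrable lborel (\<lambda>x. \<integral>y. f x * g y * k x y \<partial>lborel)"
    and "integrable lborel (\<lambda>y. \<integral>x. f x * g y * k x y \<partial>lborel)"
    and "(\<integral>x. (\<integral>y. f x * g y * k x y \<partial>lborel) \<partial>lborel) = (\<integral>y. (\<integral>x. f x * g y * k x y \<partial>lborel) \<partial>lborel)"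
    using lborel_pair.integrable_fst[of "\<lambda>x y. f x * g y * k x y"]
      lborel_pair.integrable_snd[of "\<lambda>x y. f x * g y * k x y"]
      lborel_pair.Fubini_integral[of "\<lambda>x y. f x * g y * k x y"] by simp_all
qed

lemma borel_measurable_primitive:
  fixes w :: "real \<Rightarrow> real"
  assumes [measurable]: "w \<in> borel_measurable lborel"
  shows "(\<lambda>x. \<integral>y. indicator {b..x} y * w y \<partial>lborel) \<in> borel_measurable lborel"
proof -
  have "(\<lambda>p. indicator {b..fst p} (snd p) * w (snd p)) =
      (\<lambda>p. (if b \<le> snd p \<and> snd p \<le> fst p then 1 else 0) * w (snd p))"
    by (auto simp: fun_eq_iff split: split_indicator)
  moreover have "(\<lambda>p :: real \<times> real. (if b \<le> snd p \<and> snd p \<le> fst p then 1 else 0) * w (snd p))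
      \<in> borel_measurable (lborel \<Otimes>\<^sub>M lborel)"
    by measurable
  ultimately show ?thesis
    using lborel.borel_measurable_lebesgue_integral[of "\<lambda>x y. indicator {b..x} y * w y" lborel]
    by (simp add: case_prod_beta')
qed

lemma set_integrable_primitive:
  fixes w :: "real \<Rightarrow> real"
  assumes w_meas[measurable]: "w \<in> borel_measurable lborel"
    and w_int: "set_integrable lborel {b..c} w"
  shows "set_integrable lborel {b..c} (\<lambda>x. \<integral>y. indicator {b..x} y * w y \<partial>lborel)"
proof -
  define M where "M = (\<integral>y. indicator {b..c} y * \<bar>w y\<bar> \<partial>lborel)"
  have w_int': "integrable lborel (\<lambda>y. indicator {b..c} y * w y)"
    using w_int by (simp add: set_integrable_def)
  have "0 \<le> M"
    unfolding M_def by (rule integral_nonneg_AE) simp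
  have bound: "\<bar>\<integral>y. indicator {b..x} y * w y \<partial>lborel\<bar> \<le> M" if "x \<le> c" for x
    unfolding M_def
  proof (rule integral_abs_bound_integral)
    show "integrable lborel (\<lambda>y. indicator {b..x} y * w y)"
      by (rule integrable_indicator_mult_subset[OF w_int']) (use that in auto)
    show "integrable lborel (\<lambda>y. indicator {b..c} y * \<bar>w y\<bar>)"
      using integrable_abs[OF w_int'] by (simp add: abs_mult)
    show "\<bar>indicator {b..x} y * w y\<bar> \<le> indicator {b..c} y * \<bar>w y\<bar>" for y
      using that by (simp add: abs_mult split: split_indicator)
  qed
  show ?thesis
    unfolding set_integrable_def
  proof (rule Bochner_Integration.integrable_bound)
    show "integrable lborel (\<lambda>x. indicator {b..c} x * M)"
      by (intro integrable_mult_left integrable_real_indicator) (simp_all add: emeasure_lborel_Icc_eq)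
    show "(\<lambda>x. indicator {b..c} x *\<^sub>R (\<integral>y. indicator {b..x} y * w y \<partial>lborel)) \<in> borel_measurable lborel"
      using borel_measurable_primitive[OF w_meas, of b] by measurable
    show "AE x in lborel. norm (indicator {b..c} x *\<^sub>R (\<integral>y. indicator {b..x} y * w y \<partial>lborel))
        \<le> norm (indicator {b..c} x * M)"
      using bound \<open>0 \<le> M\<close> by (intro AE_I2) (simp split: split_indicator)
  qed
qed

lemma integral_primitive_mult_integrand:
  fixes r :: "real \<Rightarrow> real" and R0 :: real
  assumes r_int: "integrable lborel (\<lambda>x. indicator {s..t} x * r x)"
    and r_meas[measurable]: "r \<in> borel_measurable borel"
  defines "R \<equiv> \<lambda>x. R0 + (\<integral>y. indicator {s..x} y * r y \<partial>lborel)"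
  shows "integrable lborel (\<lambda>x. indicator {s..t} x * (R x * r x))"
    and "(\<integral>x. indicator {s..t} x * (R x * r x) \<partial>lborel) = ((R t)\<^sup>2 - R0\<^sup>2) / 2"
proof -
  define f where "f x = indicator {s..t} x * r x" for x
  define k where "k x y = (if y \<le> x then 1 else 0 :: real)" for x y :: real
  define D where "D = (\<integral>y. f y \<partial>lborel)"
  have f_int: "integrable lborel f"
    using r_int by (simp add: f_def[abs_def])
  have k_meas: "(\<lambda>p. k (fst p) (snd p)) \<in> borel_measurable (lborel \<Otimes>\<^sub>M lborel)"
    unfolding k_def by measurable
  have k_bound: "\<bar>k x y\<bar> \<le> 1" for x y
    by (simp add: k_def)
  note Fubini = Fubini_bounded_kernel[OF f_int f_int k_meas k_bound]
  have inner_y: "(\<integral>y. f x * f y * k x y \<partial>lborel) = f x * (R x - R0)" for x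
  proof (cases "x \<in> {s..t}")
    case True
    have "(\<integral>y. f x * f y * k x y \<partial>lborel) = (\<integral>y. f x * (indicator {s..x} y * r y) \<partial>lborel)"
      by (rule Bochner_Integration.integral_cong)
         (use True in \<open>auto simp: f_def k_def split: split_indicator\<close>)
    then show ?thesis
      by (simp add: R_def)
  qed (simp add: f_def)
  have inner_x: "(\<integral>x. f x * f y * k x y \<partial>lborel) = f y * (D - (R y - R0))" for y
  proof (cases "y \<in> {s..t}")
    case True
    have "(\<integral>x. f x * f y * k x y \<partial>lborel) = (\<integral>x. f y * (indicator {y<..t} x * r x) \<partial>lborel)"
      by (rule integral_cong_AE)
         (use True in \<open>auto simp: f_def k_def split: split_indicator
           intro!: eventually_mono[OF AE_lborel_singleton[of y]]\<close>)
    also have "\<dots> = f y * (D - (R y - R0))"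
      using integral_Ioc_eq_Icc_diff[OF r_int, of y] True by (simp add: D_def f_def R_def)
    finally show ?thesis .
  qed (simp add: f_def)
  have I_int: "integrable lborel (\<lambda>x. f x * (R x - R0))"
    using Fubini(1) by (simp add: inner_y)
  define I where "I = (\<integral>x. f x * (R x - R0) \<partial>lborel)"
  have "I = (\<integral>y. f y * (D - (R y - R0)) \<partial>lborel)"
    using Fubini(3) by (simp add: inner_x inner_y I_def)
  also have "\<dots> = (\<integral>y. D * f y - f y * (R y - R0) \<partial>lborel)"
    by (simp add: algebra_simps)
  also have "\<dots> = D * D - I"
    using f_int I_int by (simp add: I_def D_def)
  finally have I_eq: "I = D * D / 2"
    by simp
  have split: "(\<lambda>x. indicator {s..t} x * (R x * r x)) = (\<lambda>x. f x * (R x - R0) + R0 * f x)"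
    by (auto simp: fun_eq_iff f_def algebra_simps)
  show "integrable lborel (\<lambda>x. indicator {s..t} x * (R x * r x))"
    unfolding split using I_int f_int by auto
  have "(\<integral>x. indicator {s..t} x * (R x * r x) \<partial>lborel) = I + R0 * D"
    unfolding split using I_int f_int by (simp add: I_def D_def)
  also have "\<dots> = ((R t)\<^sup>2 - R0\<^sup>2) / 2"
    unfolding I_eq by (simp add: R_def D_def f_def power2_eq_square algebra_simps)
  finally show "(\<integral>x. indicator {s..t} x * (R x * r x) \<partial>lborel) = ((R t)\<^sup>2 - R0\<^sup>2) / 2" .
qed

section \<open>Weak derivatives\<close>

lemma integral_mult_indicator_balance_eq_0:
  fixes h :: "real \<Rightarrow> real"
  assumes h_meas[measurable]: "h \<in> borel_measurable lborel"
    and h_int: "\<And>c. set_integrable lborel {b..c} h"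
    and orth: "\<And>\<phi>. test_fun \<phi> \<Longrightarrow> (\<And>x. x \<le> b \<Longrightarrow> \<phi> x = 0) \<Longrightarrow>
                 (\<integral>x. h x * deriv \<phi> x \<partial>lborel) = 0"
    and ac: "b \<le> a" "a \<le> c" and ac': "b \<le> a'" "a' \<le> c'"
  shows "(\<integral>x. h x * ((c' - a') * indicator {a<..c} x - (c - a) * indicator {a'<..c'} x) \<partial>lborel) = 0"
proof -
  define K where "K = max c c' + 1"
  define C where "C = \<bar>c' - a'\<bar> + \<bar>c - a\<bar>"
  define \<psi> where "\<psi> n = deriv (balanced_test a c a' c' (1 / Suc n))" for n :: nat
  have test: "test_fun (balanced_test a c a' c' (1 / Suc n))" for n
    using ac ac' by (intro test_fun_balanced_test) auto
  have bound: "norm (h x * \<psi> n x) \<le> C * \<bar>indicator {b..K} x * h x\<bar>" for n x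
  proof (cases "b \<le> x \<and> x \<le> K")
    case True
    have "\<bar>h x\<bar> * \<bar>\<psi> n x\<bar> \<le> \<bar>h x\<bar> * C"
      unfolding \<psi>_def C_def by (intro mult_left_mono abs_deriv_balanced_test_le) auto
    then show ?thesis
      using True by (simp add: abs_mult mult.commute)
  next
    case False
    have "1 / real (Suc n) \<le> 1"
      by simp
    then have "(x \<le> a \<or> x \<ge> c + 1 / Suc n) \<and> (x \<le> a' \<or> x \<ge> c' + 1 / Suc n)"
      using False ac ac' unfolding K_def by linarith
    then have "\<psi> n x = 0"
      unfolding \<psi>_def using ac ac' by (intro deriv_balanced_test_eq_0) auto
    then show ?thesis
      by (simp add: C_def)
  qed
  have "(\<lambda>n. \<integral>x. h x * \<psi> n x \<partial>lborel)
      \<longlonglongrightarrow> (\<integral>x. h x * ((c' - a') * indicator {a<..c} x - (c - a) * indicator {a'<..c'} x) \<partial>lborel)"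
  proof (rule integral_dominated_convergence[where w="\<lambda>x. C * \<bar>indicator {b..K} x * h x\<bar>"])
    show "integrable lborel (\<lambda>x. C * \<bar>indicator {b..K} x * h x\<bar>)"
      using h_int[of K] by (simp add: set_integrable_def)
    show "AE x in lborel. (\<lambda>n. h x * \<psi> n x)
        \<longlonglongrightarrow> h x * ((c' - a') * indicator {a<..c} x - (c - a) * indicator {a'<..c'} x)"
      unfolding \<psi>_def using ac ac' by (intro AE_I2 tendsto_mult_left deriv_balanced_test_tendsto)
    show "AE x in lborel. norm (h x * \<psi> n x) \<le> C * \<bar>indicator {b..K} x * h x\<bar>" for n
      using bound by simp
    show "(\<lambda>x. h x * ((c' - a') * indicator {a<..c} x - (c - a) * indicator {a'<..c'} x))
        \<in> borel_measurable lborel"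
      by measurable
    have "\<psi> n \<in> borel_measurable borel" for n
      using test[of n] unfolding \<psi>_def test_fun_iff
      by (intro borel_measurable_continuous_onI smooth_imp_continuous_on smooth_deriv) simp
    then show "(\<lambda>x. h x * \<psi> n x) \<in> borel_measurable lborel" for n
      by measurable
  qed
  moreover have "(\<integral>x. h x * \<psi> n x \<partial>lborel) = 0" for n
    unfolding \<psi>_def using ac ac' by (intro orth test balanced_test_eq_0) auto
  ultimately show ?thesis
    by (simp add: LIMSEQ_const_iff)
qed

lemma du_Bois_Reymond:
  fixes h :: "real \<Rightarrow> real"
  assumes h_meas[measurable]: "h \<in> borel_measurable lborel"
    and h_int: "\<And>c. set_integrable lborel {b..c} h"
    and orth: "\<And>\<phi>. test_fun \<phi> \<Longrightarrow> (\<And>x. x \<le> b \<Longrightarrow> \<phi> x = 0) \<Longrightarrow>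
                 (\<integral>x. h x * deriv \<phi> x \<partial>lborel) = 0"
  shows "\<exists>c0. AE x in lborel. x > b \<longrightarrow> h x = c0"
proof -
  define c0 where "c0 = (\<integral>x. indicator {b<..b+1} x * h x \<partial>lborel)"
  have restrict: "integrable lborel (\<lambda>x. indicator {a<..c} x * h x)" if "b \<le> a" for a c
  proof -
    have "integrable lborel (\<lambda>x. indicator {b..c} x * h x)"
      using h_int[of c] by (simp add: set_integrable_def)
    then show ?thesis
      by (rule integrable_indicator_mult_subset) (use that in auto)
  qed
  have const_int: "integrable lborel (\<lambda>x. indicator {a<..c} x * c0)" if "a \<le> c" for a c :: real
    using that by (intro integrable_mult_left integrable_real_indicator greaterThanAtMost_borel) simp_all
  have "(\<integral>x. indicator {a<..c} x * (h x - c0) \<partial>lborel) = 0" if "b \<le> a" "a \<le> c" for a c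
  proof -
    have "0 = (\<integral>x. h x * ((b + 1 - b) * indicator {a<..c} x - (c - a) * indicator {b<..b+1} x) \<partial>lborel)"
      using that by (intro integral_mult_indicator_balance_eq_0[symmetric, OF h_meas h_int orth]) auto
    also have "\<dots> = (\<integral>x. indicator {a<..c} x * h x - (c - a) * (indicator {b<..b+1} x * h x) \<partial>lborel)"
      by (simp add: algebra_simps)
    also have "\<dots> = (\<integral>x. indicator {a<..c} x * h x \<partial>lborel) - (c - a) * c0"
      using restrict that by (simp add: c0_def)
    finally have "(\<integral>x. indicator {a<..c} x * h x \<partial>lborel) = (c - a) * c0"
      by simp
    moreover have "(\<integral>x. indicator {a<..c} x * c0 \<partial>lborel) = (c - a) * c0"
      using that by (simp add: measure_lborel_Ioc)
    moreover have "(\<integral>x. indicator {a<..c} x * (h x - c0) \<partial>lborel)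
        = (\<integral>x. indicator {a<..c} x * h x \<partial>lborel) - (\<integral>x. indicator {a<..c} x * c0 \<partial>lborel)"
      unfolding right_diff_distrib
      by (rule Bochner_Integration.integral_diff[OF restrict[OF that(1)] const_int[OF that(2)]])
    ultimately show ?thesis
      by linarith
  qed
  moreover have "set_integrable lborel {b..c} (\<lambda>x. h x - c0)" for c
  proof -
    have "integrable lborel (\<lambda>x. indicator {b..c} x * h x - indicator {b..c} x * c0)"
      using h_int[of c] by (intro Bochner_Integration.integrable_diff integrable_mult_left
          integrable_real_indicator) (auto simp: set_integrable_def emeasure_lborel_Icc_eq)
    then show ?thesis
      by (simp add: set_integrable_def right_diff_distrib)
  qed
  ultimately have "AE x in lborel. x > b \<longrightarrow> h x - c0 = 0"
    by (intro AE_eq_0_if_interval_integrals_eq_0) auto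
  then show ?thesis
    by (intro exI[of _ c0]) (auto elim: eventually_mono)
qed

lemma deriv_eq_0_if_locally_0:
  fixes f :: "real \<Rightarrow> real"
  assumes "open S" "x \<in> S" "\<And>y. y \<in> S \<Longrightarrow> f y = 0"
  shows "deriv f x = 0"
proof -
  have "(f has_real_derivative 0) (at x)"
    by (rule has_field_derivative_transform_within_open[of "\<lambda>_. 0" 0 x S]) (use assms in auto)
  then show ?thesis
    by (rule DERIV_imp_deriv)
qed

lemma deriv_eq_0_outside:
  fixes \<phi> :: "real \<Rightarrow> real"
  assumes "\<And>x. x \<le> b \<or> x \<ge> K \<Longrightarrow> \<phi> x = 0" and "x < b \<or> x > K"
  shows "deriv \<phi> x = 0"
  using assms(2)
proof
  assume "x < b"
  then show ?thesis
    using assms(1) by (intro deriv_eq_0_if_locally_0[of "{..<b}"]) auto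
next
  assume "x > K"
  then show ?thesis
    using assms(1) by (intro deriv_eq_0_if_locally_0[of "{K<..}"]) auto
qed

lemma test_fun_vanishing_left_bounds:
  fixes \<phi> :: "real \<Rightarrow> real"
  assumes test: "test_fun \<phi>" and left: "\<And>x. x \<le> b \<Longrightarrow> \<phi> x = 0"
  obtains K C where "b \<le> K" "\<And>x. x \<le> b \<or> x \<ge> K \<Longrightarrow> \<phi> x = 0" "\<And>x. \<bar>deriv \<phi> x\<bar> \<le> C"
proof -
  obtain M where M: "\<And>x. \<phi> x \<noteq> 0 \<Longrightarrow> \<bar>x\<bar> \<le> M"
    using test unfolding test_fun_iff bounded_iff by auto
  define K where "K = max b (M + 1)"
  have bK: "b \<le> K"
    by (simp add: K_def)
  have vanish: "\<phi> x = 0" if "x \<le> b \<or> x \<ge> K" for x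
  proof (cases "x \<le> b")
    case False
    then have "\<bar>x\<bar> > M"
      using that by (simp add: K_def)
    then show ?thesis
      using M[of x] by linarith
  qed (rule left)
  have "bounded (deriv \<phi> ` {b..K})"
    using test by (intro compact_imp_bounded compact_continuous_image smooth_imp_continuous_on
        smooth_deriv) (auto simp: test_fun_iff)
  then obtain C where C: "\<And>x. x \<in> {b..K} \<Longrightarrow> \<bar>deriv \<phi> x\<bar> \<le> C"
    unfolding bounded_iff by (metis imageI real_norm_def)
  have "\<bar>deriv \<phi> x\<bar> \<le> C" for x
  proof (cases "x \<in> {b..K}")
    case False
    then have "deriv \<phi> x = 0"
      by (intro deriv_eq_0_outside[OF vanish]) auto
    moreover have "0 \<le> C"
      using C[of b] bK by simp
    ultimately show ?thesis by simp
  qed (rule C)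
  with bK vanish show ?thesis
    by (rule that)
qed

lemma integral_Icc_deriv_smooth:
  assumes "smooth \<phi>" and "y \<le> K"
  shows "(\<integral>x. indicator {y..K} x * deriv \<phi> x \<partial>lborel) = \<phi> K - \<phi> y"
proof -
  have "(\<integral>x. indicator {y..K} x *\<^sub>R deriv \<phi> x \<partial>lborel) = \<phi> K - \<phi> y"
    using assms smooth_imp_DERIV[OF assms(1)]
    by (intro integral_FTC_atLeastAtMost smooth_imp_continuous_on smooth_deriv)
       (auto simp: has_real_derivative_iff_has_vector_derivative has_vector_derivative_at_within)
  then show ?thesis
    by simp
qed

lemma integral_primitive_mult_deriv:
  fixes w \<phi> :: "real \<Rightarrow> real"
  assumes w_int: "set_integrable lborel {b..K} w" and w_meas[measurable]: "w \<in> borel_measurable lborel"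
    and \<phi>: "smooth \<phi>" and vanish: "\<And>x. x \<le> b \<or> x \<ge> K \<Longrightarrow> \<phi> x = 0" and "b \<le> K"
  shows "integrable lborel (\<lambda>x. (\<integral>y. indicator {b..x} y * w y \<partial>lborel) * deriv \<phi> x)"
    and "(\<integral>x. (\<integral>y. indicator {b..x} y * w y \<partial>lborel) * deriv \<phi> x \<partial>lborel) = - (\<integral>x. w x * \<phi> x \<partial>lborel)"
proof -
  define f where "f x = indicator {b..K} x * deriv \<phi> x" for x
  define g where "g y = indicator {b..K} y * w y" for y
  define k where "k x y = (if y \<le> x then 1 else 0 :: real)" for x y :: real
  have f_int: "integrable lborel f"
    using borel_integrable_atLeastAtMost'[OF smooth_imp_continuous_on[OF smooth_deriv[OF \<phi>]]]
    by (simp add: set_integrable_def f_def[abs_def])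
  have g_int: "integrable lborel g"
    using w_int by (simp add: set_integrable_def g_def[abs_def])
  have k_meas: "(\<lambda>p. k (fst p) (snd p)) \<in> borel_measurable (lborel \<Otimes>\<^sub>M lborel)"
    unfolding k_def by measurable
  have k_bound: "\<bar>k x y\<bar> \<le> 1" for x y
    by (simp add: k_def)
  note Fubini = Fubini_bounded_kernel[OF f_int g_int k_meas k_bound]
  have inner_y: "(\<integral>y. f x * g y * k x y \<partial>lborel) = (\<integral>y. indicator {b..x} y * w y \<partial>lborel) * deriv \<phi> x"
    for x
  proof (cases "x \<in> {b..K}")
    case True
    have "(\<integral>y. f x * g y * k x y \<partial>lborel) = (\<integral>y. deriv \<phi> x * (indicator {b..x} y * w y) \<partial>lborel)"
      by (rule Bochner_Integration.integral_cong)
         (use True in \<open>auto simp: f_def g_def k_def split: split_indicator\<close>)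
    then show ?thesis
      by (simp add: mult.commute)
  next
    case False
    then have "deriv \<phi> x = 0"
      by (intro deriv_eq_0_outside[OF vanish]) auto
    then show ?thesis
      by (simp add: f_def)
  qed
  have inner_x: "(\<integral>x. f x * g y * k x y \<partial>lborel) = - (w y * \<phi> y)" for y
  proof (cases "y \<in> {b..K}")
    case True
    have "(\<integral>x. f x * g y * k x y \<partial>lborel) = (\<integral>x. w y * (indicator {y..K} x * deriv \<phi> x) \<partial>lborel)"
      by (rule Bochner_Integration.integral_cong)
         (use True in \<open>auto simp: f_def g_def k_def split: split_indicator\<close>)
    also have "\<dots> = w y * (\<phi> K - \<phi> y)"
      using integral_Icc_deriv_smooth[OF \<phi>, of y K] True by simp
    finally show ?thesis
      using vanish[of K] by simp
  next
    case False
    then have "\<phi> y = 0"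
      using vanish by auto
    then show ?thesis
      using False by (simp add: g_def)
  qed
  show "integrable lborel (\<lambda>x. (\<integral>y. indicator {b..x} y * w y \<partial>lborel) * deriv \<phi> x)"
    using Fubini(1) by (simp add: inner_y)
  show "(\<integral>x. (\<integral>y. indicator {b..x} y * w y \<partial>lborel) * deriv \<phi> x \<partial>lborel) = - (\<integral>x. w x * \<phi> x \<partial>lborel)"
    using Fubini(3) by (simp add: inner_x inner_y)
qed

lemma weak_deriv_imp_primitive:
  fixes v w :: "real \<Rightarrow> real"
  assumes "weak_deriv v w"
  shows "\<exists>c. AE x in lborel. x > b \<longrightarrow> v x = c + (\<integral>y. indicator {b..x} y * w y \<partial>lborel)"
proof -
  have v_meas[measurable]: "v \<in> borel_measurable lborel"
    and v_int: "\<And>c. set_integrable lborel {b..c} v"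
    and w_meas[measurable]: "w \<in> borel_measurable lborel"
    and w_int: "\<And>c. set_integrable lborel {b..c} w"
    and weak: "\<And>\<phi>. test_fun \<phi> \<Longrightarrow> (\<integral>x. v x * deriv \<phi> x \<partial>lborel) = - (\<integral>x. w x * \<phi> x \<partial>lborel)"
    using assms by (auto simp: weak_deriv_def locally_integrable_def)
  define W where "W x = (\<integral>y. indicator {b..x} y * w y \<partial>lborel)" for x
  have W_meas[measurable]: "W \<in> borel_measurable lborel"
    unfolding W_def[abs_def] by (rule borel_measurable_primitive[OF w_meas])
  obtain c where "AE x in lborel. x > b \<longrightarrow> v x - W x = c"
  proof (atomize_elim, rule du_Bois_Reymond)
    show "set_integrable lborel {b..c} (\<lambda>x. v x - W x)" for c
      unfolding W_def using v_int[of c] set_integrable_primitive[OF w_meas w_int[of c]]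
      by (rule set_integral_diff)
    fix \<phi> assume test: "test_fun \<phi>" and left: "\<And>x. x \<le> b \<Longrightarrow> \<phi> x = 0"
    obtain K C where K: "b \<le> K" and vanish: "\<And>x. x \<le> b \<or> x \<ge> K \<Longrightarrow> \<phi> x = 0"
      and C: "\<And>x. \<bar>deriv \<phi> x\<bar> \<le> C"
      using test_fun_vanishing_left_bounds[OF test left] by blast
    have \<phi>: "smooth \<phi>"
      using test by (simp add: test_fun_iff)
    have deriv_meas: "deriv \<phi> \<in> borel_measurable borel"
      by (rule borel_measurable_continuous_onI[OF smooth_imp_continuous_on[OF smooth_deriv[OF \<phi>]]])
    note parts = integral_primitive_mult_deriv[OF w_int w_meas \<phi> vanish K]
    have "integrable lborel (\<lambda>x. v x * deriv \<phi> x)"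
      using deriv_meas
      by (intro integrable_mult_bounded_supported[OF v_int v_meas _ C] deriv_eq_0_outside[OF vanish])
         simp_all
    then have "(\<integral>x. (v x - W x) * deriv \<phi> x \<partial>lborel)
        = (\<integral>x. v x * deriv \<phi> x \<partial>lborel) - (\<integral>x. W x * deriv \<phi> x \<partial>lborel)"
      using parts(1) unfolding left_diff_distrib W_def by (rule Bochner_Integration.integral_diff)
    also have "\<dots> = 0"
      using weak[OF test] parts(2) by (simp add: W_def)
    finally show "(\<integral>x. (v x - W x) * deriv \<phi> x \<partial>lborel) = 0" .
  qed simp
  then show ?thesis
    by (intro exI[of _ c]) (auto simp: W_def elim!: eventually_mono)
qed

section \<open>Convolution and interaction energy\<close>

lemma borel_measurable_conv [measurable]:
  assumes [measurable]: "K \<in> borel_measurable borel" "\<rho> \<in> borel_measurable borel"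
  shows "conv K \<rho> \<in> borel_measurable borel"
  unfolding conv_def[abs_def] by measurable

lemma integral_mult_conv:
  fixes K \<rho> \<psi> :: "real \<Rightarrow> real"
  assumes K_int: "integrable lborel K" and \<rho>_int: "integrable lborel \<rho>"
    and \<psi>_meas[measurable]: "\<psi> \<in> borel_measurable lborel" and \<psi>_bound: "\<And>u. \<bar>\<psi> u\<bar> \<le> 1"
  shows "integrable lborel (\<lambda>u. \<psi> u * conv K \<rho> u)"
    and "(\<integral>u. \<psi> u * conv K \<rho> u \<partial>lborel) = (\<integral>y. \<rho> y * (\<integral>u. \<psi> u * K (u - y) \<partial>lborel) \<partial>lborel)"
proof -
  have [measurable]: "K \<in> borel_measurable borel" "\<rho> \<in> borel_measurable borel"
    using K_int \<rho>_int by auto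
  define f where "f y u = \<rho> y * (\<psi> u * K (u - y))" for y u
  have f_meas: "(\<lambda>(y, u). f y u) \<in> borel_measurable (lborel \<Otimes>\<^sub>M lborel)"
    unfolding f_def by measurable
  have shift_int: "integrable lborel (\<lambda>u. K (u - y))" for y
    using lborel_integrable_real_affine[OF K_int, of 1 "- y"] by simp
  have shift_integral: "(\<integral>u. \<bar>K (u - y)\<bar> \<partial>lborel) = (\<integral>u. \<bar>K u\<bar> \<partial>lborel)" for y
    using lborel_integral_real_affine[of 1 "\<lambda>u. \<bar>K u\<bar>" "- y"] by simp
  have bound: "\<bar>\<psi> u * K (u - y)\<bar> \<le> \<bar>K (u - y)\<bar>" for u y
    using \<psi>_bound[of u] by (simp add: abs_mult mult_left_le_one_le)
  have slice: "integrable lborel (\<lambda>u. \<psi> u * K (u - y))" for y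
    by (rule Bochner_Integration.integrable_bound[OF integrable_abs[OF shift_int[of y]]])
       (use bound in auto)
  have f_int: "integrable (lborel \<Otimes>\<^sub>M lborel) (\<lambda>(y, u). f y u)"
  proof (rule lborel_pair.Fubini_integrable[OF f_meas])
    show "AE y in lborel. integrable lborel (\<lambda>u. case (y, u) of (y, u) \<Rightarrow> f y u)"
      using slice by (simp add: f_def)
    have "integrable lborel (\<lambda>y. \<bar>\<rho> y\<bar> * (\<integral>u. \<bar>K u\<bar> \<partial>lborel))"
      using \<rho>_int by auto
    then show "integrable lborel (\<lambda>y. \<integral>u. norm (case (y, u) of (y, u) \<Rightarrow> f y u) \<partial>lborel)"
    proof (rule Bochner_Integration.integrable_bound)
      show "(\<lambda>y. \<integral>u. norm (case (y, u) of (y, u) \<Rightarrow> f y u) \<partial>lborel) \<in> borel_measurable lborel"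
        using f_meas by measurable
      have "(\<integral>u. \<bar>f y u\<bar> \<partial>lborel) \<le> \<bar>\<rho> y\<bar> * (\<integral>u. \<bar>K u\<bar> \<partial>lborel)" for y
      proof -
        have "(\<integral>u. \<bar>\<psi> u * K (u - y)\<bar> \<partial>lborel) \<le> (\<integral>u. \<bar>K (u - y)\<bar> \<partial>lborel)"
          by (rule integral_mono) (use slice shift_int bound in auto)
        then show ?thesis
          by (simp add: f_def abs_mult shift_integral mult_left_mono)
      qed
      then show "AE y in lborel. norm (\<integral>u. norm (case (y, u) of (y, u) \<Rightarrow> f y u) \<partial>lborel)
          \<le> norm (\<bar>\<rho> y\<bar> * (\<integral>u. \<bar>K u\<bar> \<partial>lborel))"
        by (intro AE_I2) (simp add: integral_nonneg_AE)
    qed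
  qed
  have outer: "(\<integral>y. f y u \<partial>lborel) = \<psi> u * conv K \<rho> u" for u
    by (simp add: f_def conv_def mult_ac)
  show "integrable lborel (\<lambda>u. \<psi> u * conv K \<rho> u)"
    using lborel_pair.integrable_snd[OF f_int] by (simp add: outer)
  have "(\<integral>u. (\<integral>y. f y u \<partial>lborel) \<partial>lborel) = (\<integral>y. (\<integral>u. f y u \<partial>lborel) \<partial>lborel)"
    using lborel_pair.Fubini_integral[OF f_int] by simp
  then show "(\<integral>u. \<psi> u * conv K \<rho> u \<partial>lborel) = (\<integral>y. \<rho> y * (\<integral>u. \<psi> u * K (u - y) \<partial>lborel) \<partial>lborel)"
    unfolding outer by (simp add: f_def)
qed

lemma conv_diff_eq_integral_conv_deriv:
  fixes G K \<rho> :: "real \<Rightarrow> real"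
  assumes G_deriv: "\<And>x. (G has_real_derivative K x) (at x)" and K_cont: "continuous_on UNIV K"
    and K_int: "integrable lborel K" and G_bounded: "bounded (range G)"
    and \<rho>_int: "integrable lborel \<rho>" and "s \<le> x"
  shows "integrable lborel (\<lambda>u. indicator {s..x} u * conv K \<rho> u)"
    and "conv G \<rho> x - conv G \<rho> s = (\<integral>u. indicator {s..x} u * conv K \<rho> u \<partial>lborel)"
proof -
  have [measurable]: "G \<in> borel_measurable borel"
    using G_deriv by (intro borel_measurable_continuous_onI continuous_at_imp_continuous_on)
                     (meson DERIV_isCont)
  have [measurable]: "\<rho> \<in> borel_measurable borel"
    using \<rho>_int by auto
  obtain B where B: "\<And>x. \<bar>G x\<bar> \<le> B"
    using G_bounded unfolding bounded_iff by auto
  note Fubini = integral_mult_conv[OF K_int \<rho>_int, of "indicator {s..x}"]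
  show "integrable lborel (\<lambda>u. indicator {s..x} u * conv K \<rho> u)"
    using Fubini(1) by (simp split: split_indicator)
  have G_int: "integrable lborel (\<lambda>y. G (z - y) * \<rho> y)" for z
  proof (rule Bochner_Integration.integrable_bound)
    show "integrable lborel (\<lambda>y. B * \<bar>\<rho> y\<bar>)"
      using \<rho>_int by auto
    have "\<bar>G (z - y)\<bar> * \<bar>\<rho> y\<bar> \<le> B * \<bar>\<rho> y\<bar>" for y
      using B[of "z - y"] by (intro mult_right_mono) auto
    then show "AE y in lborel. norm (G (z - y) * \<rho> y) \<le> norm (B * \<bar>\<rho> y\<bar>)"
      using B[of 0] by (intro AE_I2) (simp add: abs_mult)
  qed simp
  have FTC: "G (x - y) - G (s - y) = (\<integral>u. indicator {s..x} u * K (u - y) \<partial>lborel)" for y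
  proof -
    have "((\<lambda>u. G (u - y)) has_real_derivative K (u - y) * 1) (at u)" for u
      by (rule DERIV_chain2[OF G_deriv]) (auto intro!: derivative_eq_intros)
    then have "(\<integral>u. indicator {s..x} u *\<^sub>R K (u - y) \<partial>lborel) = G (x - y) - G (s - y)"
      using \<open>s \<le> x\<close>
      by (intro integral_FTC_atLeastAtMost continuous_on_compose2[OF K_cont])
         (auto intro!: continuous_intros simp: has_real_derivative_iff_has_vector_derivative
           has_vector_derivative_at_within)
    then show ?thesis by simp
  qed
  have "conv G \<rho> x - conv G \<rho> s = (\<integral>y. G (x - y) * \<rho> y - G (s - y) * \<rho> y \<partial>lborel)"
    unfolding conv_def by (rule Bochner_Integration.integral_diff[symmetric, OF G_int G_int])
  also have "\<dots> = (\<integral>y. \<rho> y * (\<integral>u. indicator {s..x} u * K (u - y) \<partial>lborel) \<partial>lborel)"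
  proof (rule Bochner_Integration.integral_cong)
    show "G (x - y) * \<rho> y - G (s - y) * \<rho> y = \<rho> y * (\<integral>u. indicator {s..x} u * K (u - y) \<partial>lborel)"
      for y
      unfolding FTC[of y, symmetric] by (simp add: algebra_simps)
  qed simp
  also have "\<dots> = (\<integral>u. indicator {s..x} u * conv K \<rho> u \<partial>lborel)"
    using Fubini(2) by (simp split: split_indicator)
  finally show "conv G \<rho> x - conv G \<rho> s = (\<integral>u. indicator {s..x} u * conv K \<rho> u \<partial>lborel)" .
qed

lemma integrable_square_mult_kernel:
  fixes K \<rho> :: "real \<Rightarrow> real"
  assumes K_int: "integrable lborel K" and [measurable]: "\<rho> \<in> borel_measurable borel"
    and \<rho>_sq: "integrable lborel (\<lambda>x. (\<rho> x)\<^sup>2)"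
  shows "integrable (lborel \<Otimes>\<^sub>M lborel) (\<lambda>p. (\<rho> (fst p))\<^sup>2 * \<bar>K (fst p - snd p)\<bar>)"
proof -
  have [measurable]: "K \<in> borel_measurable borel"
    using K_int by auto
  have slice: "integrable lborel (\<lambda>y. \<bar>K (x - y)\<bar>)" for x
    using lborel_integrable_real_affine[OF integrable_abs[OF K_int], of "-1" x] by simp
  have slice_integral: "(\<integral>y. \<bar>K (x - y)\<bar> \<partial>lborel) = (\<integral>u. \<bar>K u\<bar> \<partial>lborel)" for x
    using lborel_integral_real_affine[of "-1" "\<lambda>u. \<bar>K u\<bar>" x] by simp
  show ?thesis
  proof (rule lborel_pair.Fubini_integrable)
    show "(\<lambda>p. (\<rho> (fst p))\<^sup>2 * \<bar>K (fst p - snd p)\<bar>) \<in> borel_measurable (lborel \<Otimes>\<^sub>M lborel)"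
      by measurable
    show "AE x in lborel. integrable lborel (\<lambda>y. (\<rho> (fst (x, y)))\<^sup>2 * \<bar>K (fst (x, y) - snd (x, y))\<bar>)"
      using slice by simp
    have "(\<lambda>x. \<integral>y. norm ((\<rho> (fst (x, y)))\<^sup>2 * \<bar>K (fst (x, y) - snd (x, y))\<bar>) \<partial>lborel)
        = (\<lambda>x. (\<rho> x)\<^sup>2 * (\<integral>u. \<bar>K u\<bar> \<partial>lborel))"
      by (rule ext) (simp add: abs_mult slice_integral)
    then show "integrable lborel
        (\<lambda>x. \<integral>y. norm ((\<rho> (fst (x, y)))\<^sup>2 * \<bar>K (fst (x, y) - snd (x, y))\<bar>) \<partial>lborel)"
      using \<rho>_sq by simp
  qed
qed

lemma interaction_integrable:
  fixes K \<rho> :: "real \<Rightarrow> real"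
  assumes K_int: "integrable lborel K" and [measurable]: "\<rho> \<in> borel_measurable borel"
    and \<rho>_sq: "integrable lborel (\<lambda>x. (\<rho> x)\<^sup>2)"
  shows "integrable (lborel \<Otimes>\<^sub>M lborel) (\<lambda>p. \<rho> (fst p) * K (fst p - snd p) * \<rho> (snd p))"
proof -
  have [measurable]: "K \<in> borel_measurable borel"
    using K_int by auto
  define f where "f p = (\<rho> (fst p))\<^sup>2 * \<bar>K (fst p - snd p)\<bar>" for p :: "real \<times> real"
  define f' where "f' p = (\<rho> (snd p))\<^sup>2 * \<bar>K (fst p - snd p)\<bar>" for p :: "real \<times> real"
  have f_int: "integrable (lborel \<Otimes>\<^sub>M lborel) f"
    unfolding f_def[abs_def] by (rule integrable_square_mult_kernel[OF K_int _ \<rho>_sq]) simp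
  have "integrable lborel (\<lambda>z. K (- z))"
    using lborel_integrable_real_affine[OF K_int, of "-1" 0] by simp
  then have "integrable (lborel \<Otimes>\<^sub>M lborel) (\<lambda>p. (\<rho> (fst p))\<^sup>2 * \<bar>K (- (fst p - snd p))\<bar>)"
    by (rule integrable_square_mult_kernel[OF _ _ \<rho>_sq]) simp
  from lborel_pair.integrable_product_swap[OF this]
  have "integrable (lborel \<Otimes>\<^sub>M lborel) (\<lambda>(x, y). (\<rho> y)\<^sup>2 * \<bar>K (- (y - x))\<bar>)"
    by simp
  moreover have "(\<lambda>(x, y). (\<rho> y)\<^sup>2 * \<bar>K (- (y - x))\<bar>) = f'"
    by (auto simp: fun_eq_iff f'_def)
  ultimately have f'_int: "integrable (lborel \<Otimes>\<^sub>M lborel) f'"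
    by simp
  have bound: "norm (\<rho> x * K (x - y) * \<rho> y) \<le> norm (f (x, y) / 2 + f' (x, y) / 2)" for x y
  proof -
    have "\<bar>\<rho> x\<bar> * \<bar>\<rho> y\<bar> \<le> ((\<rho> x)\<^sup>2 + (\<rho> y)\<^sup>2) / 2"
      using sum_squares_bound[of "\<bar>\<rho> x\<bar>" "\<bar>\<rho> y\<bar>"] by (simp add: power2_eq_square)
    then have "\<bar>\<rho> x\<bar> * \<bar>\<rho> y\<bar> * \<bar>K (x - y)\<bar> \<le> ((\<rho> x)\<^sup>2 + (\<rho> y)\<^sup>2) / 2 * \<bar>K (x - y)\<bar>"
      by (rule mult_right_mono) simp
    moreover have "f (x, y) / 2 + f' (x, y) / 2 = ((\<rho> x)\<^sup>2 + (\<rho> y)\<^sup>2) / 2 * \<bar>K (x - y)\<bar>"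
      by (simp add: f_def f'_def add_divide_distrib distrib_right)
    moreover have "\<bar>\<rho> x * K (x - y) * \<rho> y\<bar> = \<bar>\<rho> x\<bar> * \<bar>\<rho> y\<bar> * \<bar>K (x - y)\<bar>"
      by (simp add: abs_mult)
    ultimately show ?thesis
      by simp
  qed
  show ?thesis
  proof (rule Bochner_Integration.integrable_bound)
    show "integrable (lborel \<Otimes>\<^sub>M lborel) (\<lambda>p. f p / 2 + f' p / 2)"
      using f_int f'_int by simp
    show "(\<lambda>p. \<rho> (fst p) * K (fst p - snd p) * \<rho> (snd p)) \<in> borel_measurable (lborel \<Otimes>\<^sub>M lborel)"
      by measurable
    show "AE p in lborel \<Otimes>\<^sub>M lborel. norm (\<rho> (fst p) * K (fst p - snd p) * \<rho> (snd p))
        \<le> norm (f p / 2 + f' p / 2)"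
      using bound by (intro AE_I2) (metis prod.collapse)
  qed
qed

lemma integral_antisymmetric_eq_0:
  fixes H :: "real \<times> real \<Rightarrow> real"
  assumes H_meas: "H \<in> borel_measurable (lborel \<Otimes>\<^sub>M lborel)" and antisym: "\<And>x y. H (y, x) = - H (x, y)"
  shows "integral\<^sup>L (lborel \<Otimes>\<^sub>M lborel) H = 0"
proof -
  have "(\<lambda>(x, y). H (y, x)) = (\<lambda>p. - H p)"
  proof
    fix p :: "real \<times> real"
    show "(case p of (x, y) \<Rightarrow> H (y, x)) = - H p"
      using antisym[of "fst p" "snd p"] by (simp add: case_prod_beta')
  qed
  then have "integral\<^sup>L (lborel \<Otimes>\<^sub>M lborel) (\<lambda>p. - H p) = integral\<^sup>L (lborel \<Otimes>\<^sub>M lborel) H"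
    using lborel_pair.integral_product_swap[OF H_meas] by simp
  then show ?thesis
    by simp
qed

lemma integral_pos_if_pos_on_Times:
  fixes H :: "real \<times> real \<Rightarrow> real"
  assumes H_int: "integrable (lborel \<Otimes>\<^sub>M lborel) H"
    and H_nonneg: "AE p in lborel \<Otimes>\<^sub>M lborel. H p \<ge> 0"
    and A: "A \<in> sets lborel" "emeasure lborel A > 0" and B: "B \<in> sets lborel" "emeasure lborel B > 0"
    and H_pos: "\<And>x y. x \<in> A \<Longrightarrow> y \<in> B \<Longrightarrow> H (x, y) > 0"
  shows "integral\<^sup>L (lborel \<Otimes>\<^sub>M lborel) H > 0"
proof -
  have "integral\<^sup>L (lborel \<Otimes>\<^sub>M lborel) H \<noteq> 0"
  proof
    assume "integral\<^sup>L (lborel \<Otimes>\<^sub>M lborel) H = 0"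
    then have "AE p in lborel \<Otimes>\<^sub>M lborel. H p = 0"
      using integral_nonneg_eq_0_iff_AE[OF H_int H_nonneg] by simp
    then have "AE p in lborel \<Otimes>\<^sub>M lborel. p \<notin> A \<times> B"
    proof eventually_elim
      case (elim p)
      then show ?case
        using H_pos[of "fst p" "snd p"] by (cases p) auto
    qed
    then have "A \<times> B \<in> null_sets (lborel \<Otimes>\<^sub>M lborel)"
      using AE_iff_null_sets[OF pair_measureI[OF A(1) B(1)]] by simp
    then have "emeasure (lborel \<Otimes>\<^sub>M lborel) (A \<times> B) = 0"
      by auto
    moreover have "emeasure (lborel \<Otimes>\<^sub>M lborel) (A \<times> B) = emeasure lborel A * emeasure lborel B"
      using A B by (intro lborel.emeasure_pair_measure_Times) auto
    ultimately show False
      using A(2) B(2) by (metis mult_eq_0_iff not_gr_zero)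
  qed
  moreover have "integral\<^sup>L (lborel \<Otimes>\<^sub>M lborel) H \<ge> 0"
    by (rule integral_nonneg_AE[OF H_nonneg])
  ultimately show ?thesis
    by simp
qed

text \<open>Oddness of \<open>K\<close> makes the interaction of \<open>\<rho>\<close> on \<open>{..t}\<close> with itself cancel; what remains
  is the attraction between the two sides of \<open>t\<close>, which is positive since \<open>K > 0\<close> on \<open>{..<0}\<close>.\<close>
lemma interaction_halfline_pos:
  fixes K \<rho> :: "real \<Rightarrow> real"
  assumes K_int: "integrable lborel K" and K_odd: "\<And>z. K (- z) = - K z"
    and K_pos: "\<And>z. z < 0 \<Longrightarrow> K z > 0"
    and \<rho>_meas[measurable]: "\<rho> \<in> borel_measurable borel" and \<rho>_sq: "integrable lborel (\<lambda>x. (\<rho> x)\<^sup>2)"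
    and \<rho>_nonneg: "AE x in lborel. \<rho> x \<ge> 0"
    and mass_left: "emeasure lborel {x. x \<le> t \<and> \<rho> x > 0} > 0"
    and mass_right: "emeasure lborel {x. x > t \<and> \<rho> x > 0} > 0"
  shows "integrable lborel (\<lambda>x. \<rho> x * conv K \<rho> x)"
    and "(\<integral>x. indicator {..t} x * (\<rho> x * conv K \<rho> x) \<partial>lborel) > 0"
proof -
  have [measurable]: "K \<in> borel_measurable borel"
    using K_int by auto
  define H where "H p = \<rho> (fst p) * K (fst p - snd p) * \<rho> (snd p)" for p :: "real \<times> real"
  define L where "L = {..t}"
  have [measurable]: "H \<in> borel_measurable (lborel \<Otimes>\<^sub>M lborel)" "L \<in> sets borel"
    unfolding H_def L_def by measurable
  have H_int: "integrable (lborel \<Otimes>\<^sub>M lborel) H"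
    using interaction_integrable[OF K_int \<rho>_meas \<rho>_sq] by (simp add: H_def[abs_def])
  have restrict: "integrable (lborel \<Otimes>\<^sub>M lborel) (\<lambda>p. indicator (A \<times> B) p * H p)"
    if "A \<in> sets borel" "B \<in> sets borel" for A B
    using integrable_mult_indicator[OF _ H_int, of "A \<times> B"] that by simp
  have inner: "(\<integral>y. H (x, y) \<partial>lborel) = \<rho> x * conv K \<rho> x" for x
    by (simp add: H_def conv_def mult.assoc)
  show "integrable lborel (\<lambda>x. \<rho> x * conv K \<rho> x)"
    using lborel_pair.integrable_fst'[OF H_int] by (simp add: inner)
  have left_eq_0: "(\<integral>p. indicator (L \<times> L) p * H p \<partial>(lborel \<Otimes>\<^sub>M lborel)) = 0"
  proof (rule integral_antisymmetric_eq_0)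
    show "(\<lambda>p. indicator (L \<times> L) p * H p) \<in> borel_measurable (lborel \<Otimes>\<^sub>M lborel)"
      by measurable
    show "indicator (L \<times> L) (y, x) * H (y, x) = - (indicator (L \<times> L) (x, y) * H (x, y))" for x y
      using K_odd[of "x - y"] by (simp add: H_def indicator_times)
  qed
  have cross_pos: "(\<integral>p. indicator (L \<times> - L) p * H p \<partial>(lborel \<Otimes>\<^sub>M lborel)) > 0"
  proof (rule integral_pos_if_pos_on_Times[OF restrict])
    have "AE p in lborel \<Otimes>\<^sub>M lborel. \<rho> (fst p) \<ge> 0 \<and> \<rho> (snd p) \<ge> 0"
    proof (rule lborel_pair.AE_pair_measure)
      show "{p \<in> space (lborel \<Otimes>\<^sub>M lborel). \<rho> (fst p) \<ge> 0 \<and> \<rho> (snd p) \<ge> 0}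
          \<in> sets (lborel \<Otimes>\<^sub>M lborel)"
        by measurable
    qed (use \<rho>_nonneg in \<open>auto elim: eventually_mono\<close>)
    then show "AE p in lborel \<Otimes>\<^sub>M lborel. indicator (L \<times> - L) p * H p \<ge> 0"
    proof eventually_elim
      case (elim p)
      then show ?case
        using K_pos[of "fst p - snd p"]
        by (auto simp: H_def L_def indicator_times split: split_indicator)
    qed
    show "indicator (L \<times> - L) (x, y) * H (x, y) > 0"
      if "x \<in> {x. x \<le> t \<and> \<rho> x > 0}" "y \<in> {x. x > t \<and> \<rho> x > 0}" for x y
      using that K_pos[of "x - y"] by (simp add: H_def L_def indicator_times)
  qed (use mass_left mass_right in simp_all)
  have "(\<integral>x. indicator L x * (\<rho> x * conv K \<rho> x) \<partial>lborel)
      = (\<integral>p. indicator (L \<times> UNIV) p * H p \<partial>(lborel \<Otimes>\<^sub>M lborel))"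
    using lborel_pair.integral_fst'[OF restrict[of L UNIV]]
    by (simp add: inner[symmetric] indicator_times)
  also have "\<dots> = (\<integral>p. indicator (L \<times> L) p * H p + indicator (L \<times> - L) p * H p \<partial>(lborel \<Otimes>\<^sub>M lborel))"
    by (rule Bochner_Integration.integral_cong) (auto simp: indicator_times split: split_indicator)
  also have "\<dots> = (\<integral>p. indicator (L \<times> - L) p * H p \<partial>(lborel \<Otimes>\<^sub>M lborel))"
    using restrict[of L L] restrict[of L "- L"] left_eq_0 by simp
  finally show "(\<integral>x. indicator {..t} x * (\<rho> x * conv K \<rho> x) \<partial>lborel) > 0"
    using cross_pos by (simp add: L_def)
qed

section \<open>Stationary states\<close>

lemma esssupp_mass_pos:
  fixes \<rho> :: "real \<Rightarrow> real"
  assumes [measurable]: "\<rho> \<in> borel_measurable lborel" and \<rho>_nonneg: "AE x in lborel. \<rho> x \<ge> 0"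
    and "x \<in> esssupp \<rho>" "open U" "x \<in> U"
  shows "emeasure lborel {y \<in> U. \<rho> y > 0} > 0"
proof (rule ccontr)
  assume "\<not> ?thesis"
  moreover have "{y \<in> U. \<rho> y > 0} \<in> sets lborel"
    using \<open>open U\<close> by measurable
  ultimately have "{y \<in> U. \<rho> y > 0} \<in> null_sets lborel"
    by (simp add: null_setsI)
  then have "AE y in lborel. y \<notin> {y \<in> U. \<rho> y > 0}"
    by (rule AE_not_in)
  then have "AE y in lborel. y \<in> U \<longrightarrow> \<rho> y = 0"
    using \<rho>_nonneg by eventually_elim auto
  then show False
    using assms(3-5) unfolding esssupp_def by blast
qed

lemma esssupp_gap:
  fixes \<rho> :: "real \<Rightarrow> real"
  assumes "\<not> connected (esssupp \<rho>)"
    and \<rho>_meas[measurable]: "\<rho> \<in> borel_measurable lborel" and \<rho>_nonneg: "AE x in lborel. \<rho> x \<ge> 0"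
  obtains t1 t2 where "t1 < t2" "AE x in lborel. t1 \<le> x \<and> x \<le> t2 \<longrightarrow> \<rho> x = 0"
    "emeasure lborel {x. x \<le> t1 \<and> \<rho> x > 0} > 0" "emeasure lborel {x. x > t1 \<and> \<rho> x > 0} > 0"
proof -
  obtain p q t0 where p: "p \<in> esssupp \<rho>" and q: "q \<in> esssupp \<rho>" and "p \<le> t0" "t0 \<le> q"
    and t0: "t0 \<notin> esssupp \<rho>"
    using assms(1) unfolding connected_iff_interval by blast
  then have "p < t0" "t0 < q"
    by (metis order.order_iff_strict)+
  obtain U where U: "open U" "AE x in lborel. x \<in> U \<longrightarrow> \<rho> x = 0" "t0 \<in> U"
    using t0 unfolding esssupp_def by blast
  then obtain e where "e > 0" "ball t0 e \<subseteq> U"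
    using openE by blast
  define d where "d = min e (min (t0 - p) (q - t0)) / 2"
  have d_bounds: "0 < d" "d \<le> e / 2" "d \<le> (t0 - p) / 2" "d \<le> (q - t0) / 2"
    using \<open>e > 0\<close> \<open>p < t0\<close> \<open>t0 < q\<close> unfolding d_def by auto
  have d: "0 < d" "d < e" "p < t0 - d" "t0 + d < q"
    using d_bounds \<open>e > 0\<close> \<open>p < t0\<close> \<open>t0 < q\<close> by auto
  have "{t0 - d..t0 + d} \<subseteq> ball t0 e"
    using d by (auto simp: dist_real_def)
  then have gap_in_U: "{t0 - d..t0 + d} \<subseteq> U"
    using \<open>ball t0 e \<subseteq> U\<close> by blast
  have "AE x in lborel. t0 - d \<le> x \<and> x \<le> t0 + d \<longrightarrow> \<rho> x = 0"
    using U(2) by (rule eventually_mono) (use gap_in_U in auto)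
  moreover have "emeasure lborel {x. x \<le> t0 - d \<and> \<rho> x > 0} > 0"
  proof -
    have "emeasure lborel {y \<in> {..<t0 - d}. \<rho> y > 0} > 0"
      using d by (intro esssupp_mass_pos[OF \<rho>_meas \<rho>_nonneg p]) auto
    also have "\<dots> \<le> emeasure lborel {x. x \<le> t0 - d \<and> \<rho> x > 0}"
      by (rule emeasure_mono) (auto, measurable)
    finally show ?thesis .
  qed
  moreover have "emeasure lborel {x. x > t0 - d \<and> \<rho> x > 0} > 0"
  proof -
    have "emeasure lborel {y \<in> {t0 - d<..}. \<rho> y > 0} > 0"
      using d by (intro esssupp_mass_pos[OF \<rho>_meas \<rho>_nonneg q]) auto
    also have "\<dots> \<le> emeasure lborel {x. x > t0 - d \<and> \<rho> x > 0}"
      by (rule emeasure_mono) (auto, measurable)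
    finally show ?thesis .
  qed
  ultimately show ?thesis
    using d by (intro that[of "t0 - d" "t0 + d"]) auto
qed

lemma deriv_odd_if_even:
  fixes G K :: "real \<Rightarrow> real"
  assumes G_deriv: "\<And>x. (G has_real_derivative K x) (at x)" and even: "\<And>x. G (- x) = G x"
  shows "K (- z) = - K z"
proof -
  have "((\<lambda>x. G (- x)) has_real_derivative K (- z) * (- 1)) (at z)"
    by (rule DERIV_chain2[OF G_deriv]) (auto intro!: derivative_eq_intros)
  then have "(G has_real_derivative - K (- z)) (at z)"
    using even by simp
  then show ?thesis
    using DERIV_unique[OF G_deriv] by fastforce
qed

lemma deriv_pos_if_radially_decreasing:
  fixes G K g g' :: "real \<Rightarrow> real"
  assumes G_deriv: "\<And>x. (G has_real_derivative K x) (at x)" and radial: "\<And>x. G x = g \<bar>x\<bar>"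
    and g_deriv: "\<And>r. r \<ge> 0 \<Longrightarrow> (g has_real_derivative g' r) (at r within {0..})"
    and g'_neg: "\<And>r. r > 0 \<Longrightarrow> g' r < 0" and "z < 0"
  shows "K z > 0"
proof -
  have "at (- z) within {0..} = at (- z)"
    using \<open>z < 0\<close> by (intro at_within_interior) auto
  then have "(g has_real_derivative g' (- z)) (at (- z))"
    using g_deriv[of "- z"] \<open>z < 0\<close> by simp
  then have "((\<lambda>y. g (- y)) has_real_derivative g' (- z) * (- 1)) (at z)"
    by (rule DERIV_chain2) (auto intro!: derivative_eq_intros)
  then have "((\<lambda>y. g (- y)) has_real_derivative - g' (- z)) (at z)"
    by simp
  then have "(G has_real_derivative - g' (- z)) (at z)"
    by (rule has_field_derivative_transform_within_open[where S="{..<0}"])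
       (use \<open>z < 0\<close> radial in auto)
  then have "K z = - g' (- z)"
    using DERIV_unique[OF G_deriv] by blast
  with g'_neg[of "- z"] \<open>z < 0\<close> show ?thesis
    by simp
qed

lemma stationary_primitive:
  fixes G K \<rho> w :: "real \<Rightarrow> real" and \<epsilon> :: real
  assumes G_deriv: "\<And>x. (G has_real_derivative K x) (at x)" and K_cont: "continuous_on UNIV K"
    and K_int: "integrable lborel K" and G_bounded: "bounded (range G)"
    and \<rho>_int: "integrable lborel \<rho>"
    and weak: "weak_deriv (\<lambda>x. \<epsilon> * \<rho> x - conv G \<rho> x) w"
  shows "\<And>x. s \<le> x \<Longrightarrow> integrable lborel (\<lambda>y. indicator {s..x} y * (w y + conv K \<rho> y))"
    and "\<exists>R0. AE x in lborel. x > s \<longrightarrow>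
           \<epsilon> * \<rho> x = R0 + (\<integral>y. indicator {s..x} y * (w y + conv K \<rho> y) \<partial>lborel)"
proof -
  note conv_primitive = conv_diff_eq_integral_conv_deriv[OF G_deriv K_cont K_int G_bounded \<rho>_int]
  have w_int: "integrable lborel (\<lambda>y. indicator {s..x} y * w y)" for x
    using weak by (simp add: weak_deriv_def locally_integrable_def set_integrable_def)
  show flux_int: "integrable lborel (\<lambda>y. indicator {s..x} y * (w y + conv K \<rho> y))" if "s \<le> x" for x
    using w_int[of x] conv_primitive(1)[OF that] by (simp add: distrib_left)
  obtain c where c: "AE x in lborel. x > s \<longrightarrow>
      \<epsilon> * \<rho> x - conv G \<rho> x = c + (\<integral>y. indicator {s..x} y * w y \<partial>lborel)"
    using weak_deriv_imp_primitive[OF weak] by blast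
  have "AE x in lborel. x > s \<longrightarrow>
      \<epsilon> * \<rho> x = (c + conv G \<rho> s) + (\<integral>y. indicator {s..x} y * (w y + conv K \<rho> y) \<partial>lborel)"
    using c
  proof eventually_elim
    case (elim x)
    show ?case
    proof
      assume "x > s"
      then have sx: "s \<le> x"
        by simp
      have "(\<integral>y. indicator {s..x} y * (w y + conv K \<rho> y) \<partial>lborel)
          = (\<integral>y. indicator {s..x} y * w y + indicator {s..x} y * conv K \<rho> y \<partial>lborel)"
        by (simp add: distrib_left)
      also have "\<dots> = (\<integral>y. indicator {s..x} y * w y \<partial>lborel)
          + (\<integral>y. indicator {s..x} y * conv K \<rho> y \<partial>lborel)"
        by (rule Bochner_Integration.integral_add[OF w_int conv_primitive(1)[OF sx]])
      also have "(\<integral>y. indicator {s..x} y * conv K \<rho> y \<partial>lborel) = conv G \<rho> x - conv G \<rho> s"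
        by (rule conv_primitive(2)[OF sx, symmetric])
      finally show "\<epsilon> * \<rho> x = (c + conv G \<rho> s) + (\<integral>y. indicator {s..x} y * (w y + conv K \<rho> y) \<partial>lborel)"
        using elim \<open>x > s\<close> by simp
    qed
  qed
  then show "\<exists>R0. AE x in lborel. x > s \<longrightarrow>
      \<epsilon> * \<rho> x = R0 + (\<integral>y. indicator {s..x} y * (w y + conv K \<rho> y) \<partial>lborel)"
    by blast
qed

text \<open>The energy identity \<open>\<integral>\<^sub>s\<^sup>t R R' = (R(t)\<^sup>2 - R(s)\<^sup>2) / 2\<close> for \<open>R = \<epsilon> \<rho>\<close>: stationarity replaces
  \<open>\<rho> R'\<close> by \<open>\<rho> F\<close>, and \<open>R(t) = 0\<close> makes the right-hand side non-positive.\<close>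
lemma primitive_energy_nonpos:
  fixes \<rho> r F :: "real \<Rightarrow> real" and \<epsilon> R0 :: real
  assumes r_int: "integrable lborel (\<lambda>x. indicator {s..t} x * r x)"
    and [measurable]: "r \<in> borel_measurable borel" "\<rho> \<in> borel_measurable borel"
      "F \<in> borel_measurable borel"
    and repr: "AE x in lborel. x > s \<longrightarrow> \<epsilon> * \<rho> x = R0 + (\<integral>y. indicator {s..x} y * r y \<partial>lborel)"
    and flux: "AE x in lborel. \<rho> x * (r x - F x) = 0"
    and vanish: "R0 + (\<integral>y. indicator {s..t} y * r y \<partial>lborel) = 0"
  shows "\<epsilon> * (\<integral>x. indicator {s..t} x * (\<rho> x * F x) \<partial>lborel) \<le> 0"
proof -
  define R where "R x = R0 + (\<integral>y. indicator {s..x} y * r y \<partial>lborel)" for x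
  have [measurable]: "R \<in> borel_measurable borel"
    using borel_measurable_primitive[of r s] unfolding R_def[abs_def] by measurable
  have "\<epsilon> * (\<integral>x. indicator {s..t} x * (\<rho> x * F x) \<partial>lborel)
      = (\<integral>x. \<epsilon> * (indicator {s..t} x * (\<rho> x * F x)) \<partial>lborel)"
    by simp
  also have "\<dots> = (\<integral>x. indicator {s..t} x * (R x * r x) \<partial>lborel)"
  proof (rule integral_cong_AE)
    show "AE x in lborel. \<epsilon> * (indicator {s..t} x * (\<rho> x * F x)) = indicator {s..t} x * (R x * r x)"
      using repr flux AE_lborel_singleton[of s]
    proof eventually_elim
      case (elim x)
      show ?case
      proof (cases "x \<in> {s..t}")
        case True
        then have "R x = \<epsilon> * \<rho> x"
          using elim(1,3) by (simp add: R_def)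
        then show ?thesis
          using True elim(2) by (auto simp: algebra_simps)
      qed simp
    qed
  qed simp_all
  also have "\<dots> = ((R t)\<^sup>2 - R0\<^sup>2) / 2"
    unfolding R_def by (rule integral_primitive_mult_integrand(2)[OF r_int]) simp
  also have "\<dots> \<le> 0"
    using vanish by (simp add: R_def)
  finally show ?thesis .
qed

lemma stationary_interaction_nonpos:
  fixes G K \<rho> w :: "real \<Rightarrow> real" and \<epsilon> :: real
  assumes G_deriv: "\<And>x. (G has_real_derivative K x) (at x)" and K_cont: "continuous_on UNIV K"
    and K_int: "integrable lborel K" and G_bounded: "bounded (range G)"
    and \<rho>_meas: "\<rho> \<in> borel_measurable lborel" and \<rho>_int: "integrable lborel \<rho>"
    and weak: "weak_deriv (\<lambda>x. \<epsilon> * \<rho> x - conv G \<rho> x) w"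
    and stationary: "AE x in lborel. \<rho> x * w x = 0"
    and gap: "t1 < t2" "AE x in lborel. t1 \<le> x \<and> x \<le> t2 \<longrightarrow> \<rho> x = 0" and "s < t1"
  shows "\<epsilon> * (\<integral>x. indicator {s..t1} x * (\<rho> x * conv K \<rho> x) \<partial>lborel) \<le> 0"
proof -
  have [measurable]: "\<rho> \<in> borel_measurable borel" "K \<in> borel_measurable borel"
    "w \<in> borel_measurable borel"
    using \<rho>_meas K_int weak by (auto simp: weak_deriv_def locally_integrable_def)
  note flux = stationary_primitive[OF G_deriv K_cont K_int G_bounded \<rho>_int weak, of s]
  then obtain R0 where repr: "AE x in lborel. x > s \<longrightarrow>
      \<epsilon> * \<rho> x = R0 + (\<integral>y. indicator {s..x} y * (w y + conv K \<rho> y) \<partial>lborel)"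
    by blast
  obtain t where "t1 < t" "t < t2" and t: "(t1 \<le> t \<and> t \<le> t2 \<longrightarrow> \<rho> t = 0) \<and>
      (t > s \<longrightarrow> \<epsilon> * \<rho> t = R0 + (\<integral>y. indicator {s..t} y * (w y + conv K \<rho> y) \<partial>lborel))"
    by (rule ex_in_Ioo_if_AE[OF AE_conjI[OF gap(2) repr] gap(1)])
  then have "s \<le> t" and vanish: "R0 + (\<integral>y. indicator {s..t} y * (w y + conv K \<rho> y) \<partial>lborel) = 0"
    using \<open>s < t1\<close> by auto
  have "AE x in lborel. \<rho> x * ((w x + conv K \<rho> x) - conv K \<rho> x) = 0"
    using stationary by simp
  then have "\<epsilon> * (\<integral>x. indicator {s..t} x * (\<rho> x * conv K \<rho> x) \<partial>lborel) \<le> 0"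
    by (intro primitive_energy_nonpos[OF flux(1)[OF \<open>s \<le> t\<close>] _ _ _ repr _ vanish]) simp_all
  moreover have "(\<integral>x. indicator {s..t} x * (\<rho> x * conv K \<rho> x) \<partial>lborel)
      = (\<integral>x. indicator {s..t1} x * (\<rho> x * conv K \<rho> x) \<partial>lborel)"
  proof (rule integral_cong_AE)
    show "AE x in lborel. indicator {s..t} x * (\<rho> x * conv K \<rho> x)
        = indicator {s..t1} x * (\<rho> x * conv K \<rho> x)"
      using gap(2) by (rule eventually_mono) (use \<open>t1 < t\<close> \<open>t < t2\<close> in \<open>auto split: split_indicator\<close>)
  qed simp_all
  ultimately show ?thesis
    by simp
qed

theorem lemma4p1:
  fixes \<epsilon> :: real and G g g' :: "real \<Rightarrow> real" and g2 :: real
    and \<rho> w :: "real \<Rightarrow> real"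
  assumes eps: "\<epsilon> > 0"
    and G_nonneg: "\<And>x. G x \<ge> 0"
    and G_supp: "closure {x. G x \<noteq> 0} = UNIV"
    and G_C2: "\<And>x. G differentiable (at x)" "\<And>x. deriv G differentiable (at x)"
              "continuous_on UNIV (deriv (deriv G))"
    and G_W11: "integrable lborel G" "integrable lborel (deriv G)"
    and G_Linf: "bounded (range G)"
    and G_radial: "\<And>x. G x = g \<bar>x\<bar>"
    and g_deriv: "\<And>r. r \<ge> 0 \<Longrightarrow> (g has_real_derivative g' r) (at r within {0..})"
    and g'_neg: "\<And>r. r > 0 \<Longrightarrow> g' r < 0"
    and g2_def: "(g' has_real_derivative g2) (at 0 within {0..})"
    and g2_neg: "g2 < 0"
    and g_lim: "(g \<longlongrightarrow> 0) at_top"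
    and G_mass: "(LINT x|lborel. G x) = 1"
    and rho_meas: "\<rho> \<in> borel_measurable lborel"
    and rho_nonneg: "AE x in lborel. \<rho> x \<ge> 0"
    and rho_L1: "integrable lborel \<rho>"
    and rho_mass: "(LINT x|lborel. \<rho> x) = 1"
    and rho_L2: "integrable lborel (\<lambda>x. (\<rho> x)\<^sup>2)"
    and w_weak: "weak_deriv (\<lambda>x. \<epsilon> * \<rho> x - conv G \<rho> x) w"
    and stationary: "AE x in lborel. \<rho> x * w x = 0"
  shows "connected (esssupp \<rho>)"
proof (rule ccontr)
  assume "\<not> connected (esssupp \<rho>)"
  then obtain t1 t2 where gap: "t1 < t2" "AE x in lborel. t1 \<le> x \<and> x \<le> t2 \<longrightarrow> \<rho> x = 0"
    and mass_left: "emeasure lborel {x. x \<le> t1 \<and> \<rho> x > 0} > 0"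
    and mass_right: "emeasure lborel {x. x > t1 \<and> \<rho> x > 0} > 0"
    by (rule esssupp_gap[OF _ rho_meas rho_nonneg])
  have G_deriv: "\<And>x. (G has_real_derivative deriv G x) (at x)"
    using G_C2(1) by (simp add: DERIV_deriv_iff_real_differentiable)
  have G'_cont: "continuous_on UNIV (deriv G)"
    using G_C2(2) by (intro continuous_at_imp_continuous_on ballI differentiable_imp_continuous_within)
  have G'_odd: "\<And>z. deriv G (- z) = - deriv G z"
    using G_radial by (intro deriv_odd_if_even[OF G_deriv]) simp
  have G'_pos: "\<And>z. z < 0 \<Longrightarrow> deriv G z > 0"
    by (rule deriv_pos_if_radially_decreasing[OF G_deriv G_radial g_deriv g'_neg])
  have "\<rho> \<in> borel_measurable borel"
    using rho_meas by simp
  note interaction = interaction_halfline_pos[OF G_W11(2) G'_odd G'_pos this rho_L2 rho_nonneg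
      mass_left mass_right]
  obtain s where "s < t1"
    and attraction: "(\<integral>x. indicator {s..t1} x * (\<rho> x * conv (deriv G) \<rho> x) \<partial>lborel) > 0"
    by (rule ex_Icc_integral_pos_if_Iic_integral_pos[OF interaction])
  have "\<epsilon> * (\<integral>x. indicator {s..t1} x * (\<rho> x * conv (deriv G) \<rho> x) \<partial>lborel) \<le> 0"
    by (rule stationary_interaction_nonpos[OF G_deriv G'_cont G_W11(2) G_Linf rho_meas rho_L1 w_weak
          stationary gap \<open>s < t1\<close>])
  then show False
    using mult_pos_pos[OF eps attraction] by simp
qed

end
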